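(* Let $p\in[1,2]$, $p^*=\frac{p}{p-1}$ ($p^*=\infty$ if $p=1$), and let $m\ge2$ be an integer. Then for every $N\in\mathbb{N}$ and every real array $(y_{i_1\dots i_m})_{i_1,\dots,i_m=1}^N$, \[ \left(\sum_{i_1,\dots,i_m=1}^N|y_{i_1\dots i_m}|^2\right)^{1/2}\le D_{(m+1),p^*}\left(\int_{[0,1]^m}\left|\sum_{i_1,\dots,i_m=1}^N r_{i_1}(t_1)\cdots r_{i_m}(t_m)y_{i_1\dots i_m}\right|^p dt_1\cdots dt_m\right)^{1/p}. \] Consequently $(\mathrm{A}_p)^m\le D_{(m+1),p^*}$.
   Context: Scalars are real. $X_q=\ell_q$ for $1\le q<\infty$, $X_\infty=c_0$, $(e_k)$ canonical unit vectors; $\|T\|$ is the supremum of $|T(x^{(1)},\dots,x^{(M)})|$ over the product of the closed unit balls. $r_j(t)=\operatorname{sign}(\sin(2^j\pi t))$ are the Rademacher functions. For $0<r<\infty$, $\mathrm{A}_r$ is the optimal constant such that $\left(\sum_{j=1}^n|a_j|^2\right)^{1/2}\le \mathrm{A}_r\left(\int_0^1|\sum_{j=1}^n a_jr_j(t)|^rdt\right)^{1/r}$ for all $n$ and real $a_j$. For an integer $M\ge3$ and $q\in[2,\infty]$, $D_{(M),q}$ denotes the optimal constant $D$ such that $\left(\sum_{i_2,\dots,i_M}\left(\sum_{i_1}|T(e_{i_1},\dots,e_{i_M})|^{\frac{q}{q-1}}\right)^{2\frac{q-1}{q}}\right)^{1/2}\le D\|T\|$ for all continuous $M$-linear $T:X_q\times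 X_\infty\times\cdots\times X_\infty\to\mathbb{R}$ ($q/(q-1)$ read as $1$ when $q=\infty$). *)

theory Defs
  imports "HOL-Analysis.Analysis"
begin

definition lq_space :: "real \<Rightarrow> (nat \<Rightarrow> real) set" where
  "lq_space q = {x. summable (\<lambda>n. \<bar>x n\<bar> powr q)}"

definition lq_norm :: "real \<Rightarrow> (nat \<Rightarrow> real) \<Rightarrow> real" where
  "lq_norm q x = (\<Sum>n. \<bar>x n\<bar> powr q) powr (1 / q)"

definition c0_space :: "(nat \<Rightarrow> real) set" where
  "c0_space = {x. x \<longlonglongrightarrow> 0}"

definition c0_norm :: "(nat \<Rightarrow> real) \<Rightarrow> real" where
  "c0_norm x = (SUP n. \<bar>x n\<bar>)"

definition X_space :: "ereal \<Rightarrow> (nat \<Rightarrow> real) set" where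
  "X_space q = (if q = \<infinity> then c0_space else lq_space (real_of_ereal q))"

definition X_norm :: "ereal \<Rightarrow> (nat \<Rightarrow> real) \<Rightarrow> real" where
  "X_norm q x = (if q = \<infinity> then c0_norm x else lq_norm (real_of_ereal q) x)"

definition unit_vec :: "nat \<Rightarrow> nat \<Rightarrow> real" where
  "unit_vec j = (\<lambda>n. if n = j then 1 else 0)"

text \<open>An M-tuple of vectors is a function x :: nat => (nat => real); slot k < M holds
  the k-th argument (slot 0 is the X_q argument), slots k >= M are zero.\<close>

definition slot_space :: "ereal \<Rightarrow> nat \<Rightarrow> (nat \<Rightarrow> real) set" where
  "slot_space q k = (if k = 0 then X_space q else c0_space)"

definition slot_norm :: "ereal \<Rightarrow> nat \<Rightarrow> (nat \<Rightarrow> real) \<Rightarrow> real" where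
  "slot_norm q k v = (if k = 0 then X_norm q v else c0_norm v)"

definition tuples :: "nat \<Rightarrow> ereal \<Rightarrow> (nat \<Rightarrow> nat \<Rightarrow> real) set" where
  "tuples M q = {x. (\<forall>k<M. x k \<in> slot_space q k) \<and> (\<forall>k\<ge>M. x k = (\<lambda>_. 0))}"

definition unit_tuples :: "nat \<Rightarrow> ereal \<Rightarrow> (nat \<Rightarrow> nat \<Rightarrow> real) set" where
  "unit_tuples M q = {x \<in> tuples M q. \<forall>k<M. slot_norm q k (x k) \<le> 1}"

definition multilinear_form :: "nat \<Rightarrow> ereal \<Rightarrow> ((nat \<Rightarrow> nat \<Rightarrow> real) \<Rightarrow> real) \<Rightarrow> bool" where
  "multilinear_form M q T \<longleftrightarrow>
     (\<forall>x\<in>tuples M q. \<forall>k<M. \<forall>u\<in>slot_space q k. \<forall>v\<in>slot_space q k. \<forall>a b::real.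
        T (x(k := (\<lambda>n. a * u n + b * v n))) = a * T (x(k := u)) + b * T (x(k := v)))"

definition form_norm :: "nat \<Rightarrow> ereal \<Rightarrow> ((nat \<Rightarrow> nat \<Rightarrow> real) \<Rightarrow> real) \<Rightarrow> real" where
  "form_norm M q T = (SUP x\<in>unit_tuples M q. \<bar>T x\<bar>)"

text \<open>Continuity of a multilinear form is (equivalently) boundedness on the product of
  the closed unit balls.\<close>
definition cont_multilinear_form :: "nat \<Rightarrow> ereal \<Rightarrow> ((nat \<Rightarrow> nat \<Rightarrow> real) \<Rightarrow> real) \<Rightarrow> bool" where
  "cont_multilinear_form M q T \<longleftrightarrow>
     multilinear_form M q T \<and> bdd_above ((\<lambda>x. \<bar>T x\<bar>) ` unit_tuples M q)"

definition conj_exp :: "ereal \<Rightarrow> real" where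
  "conj_exp q = (if q = \<infinity> then 1 else real_of_ereal q / (real_of_ereal q - 1))"

text \<open>T(e_{i_1}, ..., e_{i_M}) with i_1 = j and i_k = i k for 1 <= k < M.\<close>
definition coeff :: "nat \<Rightarrow> ((nat \<Rightarrow> nat \<Rightarrow> real) \<Rightarrow> real) \<Rightarrow> nat \<Rightarrow> (nat \<Rightarrow> nat) \<Rightarrow> real" where
  "coeff M T j i = T (\<lambda>k. if k = 0 then unit_vec j else if k < M then unit_vec (i k) else (\<lambda>_. 0))"

text \<open>The mixed (q*,2) sum truncated to indices < N; the full (infinite) sum is the
  supremum over N of these truncations (all terms are nonnegative).\<close>
definition mixed_sum :: "nat \<Rightarrow> ereal \<Rightarrow> ((nat \<Rightarrow> nat \<Rightarrow> real) \<Rightarrow> real) \<Rightarrow> nat \<Rightarrow> real" where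
  "mixed_sum M q T N =
     (\<Sum>i\<in>({1..<M} \<rightarrow>\<^sub>E {..<N}).
        (\<Sum>j<N. \<bar>coeff M T j i\<bar> powr conj_exp q) powr (2 / conj_exp q)) powr (1/2)"

definition D_const :: "nat \<Rightarrow> ereal \<Rightarrow> real" where
  "D_const M q = Inf {D. D \<ge> 0 \<and> (\<forall>T. cont_multilinear_form M q T \<longrightarrow>
                         (\<forall>N. mixed_sum M q T N \<le> D * form_norm M q T))}"

definition rademacher :: "nat \<Rightarrow> real \<Rightarrow> real" where
  "rademacher j t = sgn (sin (2 ^ j * pi * t))"

definition khintchine_A :: "real \<Rightarrow> real" where
  "khintchine_A r = Inf {A. \<forall>(n::nat) (a::nat \<Rightarrow> real).
      sqrt (\<Sum>j=1..n. (a j)\<^sup>2) \<le>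
        A * (LINT t:{0..1}|lborel. \<bar>\<Sum>j=1..n. a j * rademacher j t\<bar> powr r) powr (1 / r)}"

definition conj_ereal :: "real \<Rightarrow> ereal" where
  "conj_ereal p = (if p = 1 then \<infinity> else ereal (p / (p - 1)))"

end

theory Submission
  imports Defs "HOL-Probability.Infinite_Product_Measure"
begin

text \<open>
  A Rademacher chaos of order \<open>m\<close> built from \<open>r_1, ..., r_N\<close> only sees the first \<open>N\<close> binary
  digits of each variable, so its \<open>L^p\<close> norm is an average over the discrete cube indexed by
  \<open>{1..m} \<times> {1..N}\<close>, on which the products of Rademacher functions become Walsh functions \<open>w_i\<close>.
  Index the first variable of an \<open>(m+1)\<close>-linear form by the points \<open>A\<close> of that cube and give it
  the coefficients \<open>2^(-mN/p) y_i w_i(A)\<close>.  Its mixed \<open>(p*, 2)\<close> sum is \<open>\<parallel>y\<parallel>_2\<close>, while Hoelder's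
  inequality and the contraction principle bound its norm by \<open>\<parallel>\<Sum>_i y_i w_i\<parallel>_p\<close>; this gives the
  inequality for every admissible constant.  The constant \<open>3^m\<close> is admissible (by Bonami's
  hypercontractive inequality, duality and Minkowski's inequality), so the inequality passes to the
  infimum \<open>D_(m+1),p*\<close>.  For product coefficients \<open>y_i = \<Prod>_k a_(i_k)\<close> both sides factor into
  \<open>m\<close>-th powers, which yields \<open>A_p^m \<le> D_(m+1),p*\<close>.
\<close>

section \<open>Walsh functions on the discrete cube\<close>

text \<open>A subset \<open>A \<subseteq> V\<close> encodes the point \<open>x\<close> of \<open>{-1,1}^V\<close> with \<open>x_v = -1\<close> exactly for
  \<open>v \<in> A\<close>; \<open>cube_avg V\<close> is the expectation for the uniform measure on the cube and
  \<open>walsh S\<close> is the character \<open>x \<mapsto> \<Prod>v\<in>S. x_v\<close>.\<close>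

definition cube_sign :: "'v set \<Rightarrow> 'v \<Rightarrow> real" where
  "cube_sign A v = (if v \<in> A then -1 else 1)"

definition walsh :: "'v set \<Rightarrow> 'v set \<Rightarrow> real" where
  "walsh S A = (\<Prod>v\<in>S. cube_sign A v)"

definition cube_avg :: "'v set \<Rightarrow> ('v set \<Rightarrow> real) \<Rightarrow> real" where
  "cube_avg V f = (\<Sum>A\<in>Pow V. f A) / 2 ^ card V"

lemma sum_Pow_insert:
  assumes "finite W" "v \<notin> W"
  shows "(\<Sum>A\<in>Pow (insert v W). f A) = (\<Sum>A\<in>Pow W. f A) + (\<Sum>A\<in>Pow W. f (insert v A))"
proof -
  have "inj_on (insert v) (Pow W)"
    using assms(2) unfolding inj_on_def by (metis Pow_iff insert_ident subset_iff)
  moreover have "Pow W \<inter> insert v ` Pow W = {}" using assms(2) by auto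
  ultimately show ?thesis
    using assms(1) by (simp add: Pow_insert sum.union_disjoint sum.reindex)
qed

lemma cube_avg_insert:
  assumes "finite W" "v \<notin> W"
  shows "cube_avg (insert v W) f = (cube_avg W f + cube_avg W (\<lambda>A. f (insert v A))) / 2"
  using assms unfolding cube_avg_def by (simp add: sum_Pow_insert field_simps)

lemma cube_avg_empty: "cube_avg {} f = f {}"
  unfolding cube_avg_def by simp

lemma cube_avg_cong: "(\<And>A. A \<subseteq> V \<Longrightarrow> f A = g A) \<Longrightarrow> cube_avg V f = cube_avg V g"
  unfolding cube_avg_def by (intro arg_cong2[where f="(/)"] sum.cong) auto

lemma cube_avg_mono: "(\<And>A. A \<subseteq> V \<Longrightarrow> f A \<le> g A) \<Longrightarrow> cube_avg V f \<le> cube_avg V g"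
  unfolding cube_avg_def by (intro divide_right_mono sum_mono) auto

lemma cube_avg_nonneg: "(\<And>A. A \<subseteq> V \<Longrightarrow> 0 \<le> f A) \<Longrightarrow> 0 \<le> cube_avg V f"
  unfolding cube_avg_def by (intro divide_nonneg_pos sum_nonneg) auto

lemma cube_avg_add: "cube_avg V (\<lambda>A. f A + g A) = cube_avg V f + cube_avg V g"
  unfolding cube_avg_def by (simp add: sum.distrib add_divide_distrib)

lemma cube_avg_cmult: "cube_avg V (\<lambda>A. c * f A) = c * cube_avg V f"
  unfolding cube_avg_def by (simp add: sum_distrib_left)

lemma cube_avg_divide: "cube_avg V (\<lambda>A. f A / c) = cube_avg V f / c"
  unfolding cube_avg_def by (simp add: sum_divide_distrib mult.commute)

lemma cube_avg_sum: "cube_avg V (\<lambda>A. \<Sum>i\<in>I. f i A) = (\<Sum>i\<in>I. cube_avg V (f i))"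
  unfolding cube_avg_def by (simp add: sum.swap[of _ _ I] sum_divide_distrib)

lemma cube_avg_const: "finite V \<Longrightarrow> cube_avg V (\<lambda>_. c) = c"
  unfolding cube_avg_def by (simp add: card_Pow)

text \<open>In this encoding \<open>A \<mapsto> sym_diff A E\<close> is the reflection \<open>x \<mapsto> x \<cdot> \<epsilon>\<close> of the cube, where
  \<open>\<epsilon>\<close> is the point encoded by \<open>E\<close>.\<close>

lemma cube_avg_symdiff:
  assumes "E \<subseteq> V"
  shows "cube_avg V (\<lambda>A. f (sym_diff A E)) = cube_avg V f"
proof -
  have "bij_betw (\<lambda>A. sym_diff A E) (Pow V) (Pow V)"
    by (rule bij_betw_byWitness[where f'="\<lambda>A. sym_diff A E"]) (use assms in auto)
  then show ?thesis
    unfolding cube_avg_def using sum.reindex_bij_betw[of _ "Pow V" "Pow V" f] by simp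
qed

lemma cube_avg_Cauchy_Schwarz:
  "(cube_avg V (\<lambda>A. f A * g A))\<^sup>2 \<le> cube_avg V (\<lambda>A. (f A)\<^sup>2) * cube_avg V (\<lambda>A. (g A)\<^sup>2)"
proof -
  have "(\<Sum>A\<in>Pow V. f A * g A)\<^sup>2 \<le> (\<Sum>A\<in>Pow V. (f A)\<^sup>2) * (\<Sum>A\<in>Pow V. (g A)\<^sup>2)"
    by (rule Cauchy_Schwarz_ineq_sum)
  then show ?thesis
    unfolding cube_avg_def by (simp add: power_divide divide_right_mono power2_eq_square)
qed

lemma cube_sign_symdiff: "cube_sign (sym_diff A E) v = cube_sign A v * cube_sign E v"
  unfolding cube_sign_def by auto

lemma abs_cube_sign [simp]: "\<bar>cube_sign A v\<bar> = 1"
  unfolding cube_sign_def by simp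

lemma abs_walsh [simp]: "\<bar>walsh S A\<bar> = 1"
  unfolding walsh_def by (simp add: abs_prod)

lemma walsh_mult_self: "walsh S A * walsh S A = 1"
  using abs_walsh[of S A] by (metis abs_mult_self_eq mult_1_right)

lemma walsh_mult:
  assumes "finite S" "finite S'"
  shows "walsh S A * walsh S' A = walsh (sym_diff S S') A"
proof -
  have "walsh S A = walsh (S - S') A * walsh (S \<inter> S') A"
    "walsh S' A = walsh (S' - S) A * walsh (S \<inter> S') A"
    unfolding walsh_def using assms
    by (subst prod.union_disjoint[symmetric]; auto intro: prod.cong)+
  moreover have "walsh (sym_diff S S') A = walsh (S - S') A * walsh (S' - S) A"
    unfolding walsh_def using assms by (subst prod.union_disjoint) auto
  ultimately show ?thesis
    using walsh_mult_self[of "S \<inter> S'" A] by (simp add: algebra_simps)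
qed

lemma cube_avg_walsh_eq_0:
  assumes "finite V" "S \<subseteq> V" "v \<in> S"
  shows "cube_avg V (walsh S) = 0"
proof -
  have "finite S" using assms finite_subset by blast
  then have split: "walsh S B = cube_sign B v * walsh (S - {v}) B" for B
    unfolding walsh_def using assms(3) by (simp add: prod.remove)
  have "walsh (S - {v}) (sym_diff A {v}) = walsh (S - {v}) A" for A
    unfolding walsh_def by (intro prod.cong) (auto simp: cube_sign_def)
  then have flip: "walsh S (sym_diff A {v}) = - walsh S A" for A
    unfolding split by (simp add: cube_sign_def)
  have "cube_avg V (walsh S) = cube_avg V (\<lambda>A. walsh S (sym_diff A {v}))"
    using cube_avg_symdiff[of "{v}" V "walsh S"] assms by auto
  also have "\<dots> = - cube_avg V (walsh S)"
    using cube_avg_cmult[of V "-1" "walsh S"] by (simp add: flip)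
  finally show ?thesis by simp
qed

lemma cube_avg_walsh_orthonormal:
  assumes "finite V" "S \<subseteq> V" "S' \<subseteq> V"
  shows "cube_avg V (\<lambda>A. walsh S A * walsh S' A) = (if S = S' then 1 else 0)"
proof (cases "S = S'")
  case True
  then show ?thesis using cube_avg_const[OF assms(1), of 1] by (simp add: walsh_mult_self)
next
  case False
  have "finite S" "finite S'" using assms finite_subset by auto
  moreover obtain v where "v \<in> sym_diff S S'" using False by blast
  ultimately have "cube_avg V (walsh (sym_diff S S')) = 0"
    using assms by (intro cube_avg_walsh_eq_0[of V _ v]) auto
  then show ?thesis using False \<open>finite S\<close> \<open>finite S'\<close> by (simp add: walsh_mult)
qed

lemma cube_avg_walsh_sum_square:
  assumes "finite V" "finite I" "\<forall>i\<in>I. S i \<subseteq> V" "inj_on S I"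
  shows "cube_avg V (\<lambda>A. (\<Sum>i\<in>I. b i * walsh (S i) A)\<^sup>2) = (\<Sum>i\<in>I. (b i)\<^sup>2)"
proof -
  have "cube_avg V (\<lambda>A. (\<Sum>i\<in>I. b i * walsh (S i) A)\<^sup>2)
      = cube_avg V (\<lambda>A. \<Sum>i\<in>I. \<Sum>i'\<in>I. b i * b i' * (walsh (S i) A * walsh (S i') A))"
    by (rule cube_avg_cong) (simp add: power2_eq_square sum_product mult_ac)
  also have "\<dots> = (\<Sum>i\<in>I. \<Sum>i'\<in>I. b i * b i' * cube_avg V (\<lambda>A. walsh (S i) A * walsh (S i') A))"
    by (simp add: cube_avg_sum cube_avg_cmult)
  also have "\<dots> = (\<Sum>i\<in>I. \<Sum>i'\<in>I. if i = i' then b i * b i' else 0)"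
  proof (intro sum.cong refl)
    fix i i' assume i: "i \<in> I" "i' \<in> I"
    then have "S i = S i' \<longleftrightarrow> i = i'" using assms(4) by (auto dest: inj_onD)
    then show "b i * b i' * cube_avg V (\<lambda>A. walsh (S i) A * walsh (S i') A) = (if i = i' then b i * b i' else 0)"
      using cube_avg_walsh_orthonormal[OF assms(1), of "S i" "S i'"] assms(3) i by auto
  qed
  also have "\<dots> = (\<Sum>i\<in>I. (b i)\<^sup>2)" using assms(2) by (simp add: power2_eq_square)
  finally show ?thesis .
qed

section \<open>Bonami's inequality and Khintchine's inequality for Walsh chaos\<close>

lemma walsh_insert_notin: "v \<notin> S \<Longrightarrow> v \<notin> A \<Longrightarrow> walsh S (insert v A) = walsh S A"
  unfolding walsh_def by (intro prod.cong) (auto simp: cube_sign_def)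

lemma walsh_remove_notin:
  assumes "v \<notin> A" "finite S"
  shows "walsh S A = walsh (S - {v}) A"
proof (cases "v \<in> S")
  case True
  then show ?thesis unfolding walsh_def using assms by (simp add: prod.remove cube_sign_def)
qed simp

lemma walsh_insert_in:
  assumes "v \<in> S" "v \<notin> A" "finite S"
  shows "walsh S (insert v A) = - walsh (S - {v}) A"
proof -
  have "walsh S (insert v A) = cube_sign (insert v A) v * walsh (S - {v}) (insert v A)"
    unfolding walsh_def using assms by (simp add: prod.remove)
  also have "walsh (S - {v}) (insert v A) = walsh (S - {v}) A"
    by (rule walsh_insert_notin) (use assms in auto)
  finally show ?thesis by (simp add: cube_sign_def)
qed

text \<open>Splitting a Walsh expansion along the coordinate \<open>v\<close> as \<open>f = g + x_v h\<close>.\<close>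

lemma walsh_sum_split:
  assumes "finite I" "\<And>i. i \<in> I \<Longrightarrow> finite (S i)" "v \<notin> A"
  shows "(\<Sum>i\<in>I. b i * walsh (S i) A) =
           (\<Sum>i\<in>{i\<in>I. v \<notin> S i}. b i * walsh (S i) A) + (\<Sum>i\<in>{i\<in>I. v \<in> S i}. b i * walsh (S i - {v}) A)"
    and "(\<Sum>i\<in>I. b i * walsh (S i) (insert v A)) =
           (\<Sum>i\<in>{i\<in>I. v \<notin> S i}. b i * walsh (S i) A) - (\<Sum>i\<in>{i\<in>I. v \<in> S i}. b i * walsh (S i - {v}) A)"
proof -
  have I: "I = {i\<in>I. v \<notin> S i} \<union> {i\<in>I. v \<in> S i}" "{i\<in>I. v \<notin> S i} \<inter> {i\<in>I. v \<in> S i} = {}"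
    by auto
  have sum_I: "(\<Sum>i\<in>I. F i) = (\<Sum>i\<in>{i\<in>I. v \<notin> S i}. F i) + (\<Sum>i\<in>{i\<in>I. v \<in> S i}. F i)" for F
    using assms(1) by (subst I(1)) (simp add: sum.union_disjoint[OF _ _ I(2)])
  have "walsh (S i) A = walsh (S i - {v}) A" if "i \<in> I" for i
    using walsh_remove_notin[OF assms(3) assms(2)[OF that]] .
  then show "(\<Sum>i\<in>I. b i * walsh (S i) A) =
           (\<Sum>i\<in>{i\<in>I. v \<notin> S i}. b i * walsh (S i) A) + (\<Sum>i\<in>{i\<in>I. v \<in> S i}. b i * walsh (S i - {v}) A)"
    unfolding sum_I by (intro arg_cong2[where f="(+)"] sum.cong refl) auto
  show "(\<Sum>i\<in>I. b i * walsh (S i) (insert v A)) =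
           (\<Sum>i\<in>{i\<in>I. v \<notin> S i}. b i * walsh (S i) A) - (\<Sum>i\<in>{i\<in>I. v \<in> S i}. b i * walsh (S i - {v}) A)"
    unfolding sum_I diff_conv_add_uminus sum_negf[symmetric] using assms(2,3)
    by (auto intro!: sum.cong arg_cong2[where f="(+)"] simp: walsh_insert_notin walsh_insert_in)
qed

lemma cube_avg_insert_moments:
  assumes "finite W" "v \<notin> W"
    and "\<And>A. A \<subseteq> W \<Longrightarrow> f A = g A + h A" "\<And>A. A \<subseteq> W \<Longrightarrow> f (insert v A) = g A - h A"
  shows "cube_avg (insert v W) (\<lambda>A. (f A)\<^sup>2) = cube_avg W (\<lambda>A. (g A)\<^sup>2) + cube_avg W (\<lambda>A. (h A)\<^sup>2)"
    and "cube_avg (insert v W) (\<lambda>A. (f A) ^ 4) =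
           cube_avg W (\<lambda>A. (g A) ^ 4) + 6 * cube_avg W (\<lambda>A. (g A)\<^sup>2 * (h A)\<^sup>2) + cube_avg W (\<lambda>A. (h A) ^ 4)"
proof -
  have avg: "cube_avg (insert v W) F = cube_avg W (\<lambda>A. (F' (g A + h A) + F' (g A - h A)) / 2)"
    if "\<And>A. F A = F' (f A)" for F F'
    by (simp add: that cube_avg_insert[OF assms(1,2)] assms(3,4) cube_avg_add[symmetric] cube_avg_divide
        cong: cube_avg_cong)
  have id: "((x + y)\<^sup>2 + (x - y)\<^sup>2) / 2 = x\<^sup>2 + y\<^sup>2"
    "((x + y) ^ 4 + (x - y) ^ 4) / 2 = x ^ 4 + 6 * (x\<^sup>2 * y\<^sup>2) + y ^ 4" for x y :: real
    by algebra+
  show "cube_avg (insert v W) (\<lambda>A. (f A)\<^sup>2) = cube_avg W (\<lambda>A. (g A)\<^sup>2) + cube_avg W (\<lambda>A. (h A)\<^sup>2)"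
    and "cube_avg (insert v W) (\<lambda>A. (f A) ^ 4) =
           cube_avg W (\<lambda>A. (g A) ^ 4) + 6 * cube_avg W (\<lambda>A. (g A)\<^sup>2 * (h A)\<^sup>2) + cube_avg W (\<lambda>A. (h A) ^ 4)"
    by (simp_all only: avg[of _ "\<lambda>x. x\<^sup>2"] avg[of _ "\<lambda>x. x ^ 4"] id cube_avg_add cube_avg_cmult)
qed

lemma bonami_step_inequality:
  fixes a b G H X c :: real
  assumes "0 \<le> a" "0 \<le> b" "0 \<le> c" "0 \<le> X" "0 \<le> G" "0 \<le> H"
    and "G \<le> 9 * c * a\<^sup>2" "H \<le> c * b\<^sup>2" "X\<^sup>2 \<le> G * H"
  shows "G + 6 * X + H \<le> 9 * c * (a + b)\<^sup>2"
proof -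
  have "X\<^sup>2 \<le> (9 * c * a\<^sup>2) * (c * b\<^sup>2)"
    using assms by (meson mult_mono order.trans)
  also have "\<dots> = (3 * c * a * b)\<^sup>2" by (simp add: power2_eq_square algebra_simps)
  finally have "X \<le> 3 * c * a * b"
    by (rule power2_le_imp_le) (use assms in simp)
  moreover have "9 * c * (a + b)\<^sup>2 = 9 * c * a\<^sup>2 + 6 * (3 * c * a * b) + 9 * (c * b\<^sup>2)"
    by (simp add: power2_eq_square algebra_simps)
  moreover have "0 \<le> c * b\<^sup>2" using assms by simp
  ultimately show ?thesis using assms(7,8) by linarith
qed

lemma cube_avg_insert_fourth_moment_le:
  assumes "finite W" "v \<notin> W"
    and "\<And>A. A \<subseteq> W \<Longrightarrow> f A = g A + h A" "\<And>A. A \<subseteq> W \<Longrightarrow> f (insert v A) = g A - h A"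
    and "cube_avg W (\<lambda>A. (g A) ^ 4) \<le> 9 * c * (cube_avg W (\<lambda>A. (g A)\<^sup>2))\<^sup>2"
    and "cube_avg W (\<lambda>A. (h A) ^ 4) \<le> c * (cube_avg W (\<lambda>A. (h A)\<^sup>2))\<^sup>2" "0 \<le> c"
  shows "cube_avg (insert v W) (\<lambda>A. (f A) ^ 4) \<le> 9 * c * (cube_avg (insert v W) (\<lambda>A. (f A)\<^sup>2))\<^sup>2"
proof -
  have "(cube_avg W (\<lambda>A. (g A)\<^sup>2 * (h A)\<^sup>2))\<^sup>2 \<le> cube_avg W (\<lambda>A. (g A) ^ 4) * cube_avg W (\<lambda>A. (h A) ^ 4)"
    using cube_avg_Cauchy_Schwarz[of W "\<lambda>A. (g A)\<^sup>2" "\<lambda>A. (h A)\<^sup>2"] by (simp add: power_mult[symmetric])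
  moreover have "cube_avg (insert v W) (\<lambda>A. (f A)\<^sup>2) = cube_avg W (\<lambda>A. (g A)\<^sup>2) + cube_avg W (\<lambda>A. (h A)\<^sup>2)"
    by (rule cube_avg_insert_moments(1)[OF assms(1,2)]) (simp_all add: assms(3,4))
  moreover have "cube_avg (insert v W) (\<lambda>A. (f A) ^ 4) =
      cube_avg W (\<lambda>A. (g A) ^ 4) + 6 * cube_avg W (\<lambda>A. (g A)\<^sup>2 * (h A)\<^sup>2) + cube_avg W (\<lambda>A. (h A) ^ 4)"
    by (rule cube_avg_insert_moments(2)[OF assms(1,2)]) (simp_all add: assms(3,4))
  ultimately show ?thesis
    using assms(5-7) by (simp only:) (intro bonami_step_inequality; simp add: cube_avg_nonneg)
qed

theorem bonami_inequality:
  assumes "finite V" "finite I" "\<forall>i\<in>I. S i \<subseteq> V \<and> card (S i) \<le> d"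
  shows "cube_avg V (\<lambda>A. (\<Sum>i\<in>I. b i * walsh (S i) A) ^ 4)
           \<le> 9 ^ d * (cube_avg V (\<lambda>A. (\<Sum>i\<in>I. b i * walsh (S i) A)\<^sup>2))\<^sup>2"
  using assms
proof (induction V arbitrary: I S b d rule: finite_induct)
  case empty
  then have "walsh (S i) {} = 1" if "i \<in> I" for i using that by (auto simp: walsh_def)
  then have "(\<Sum>i\<in>I. b i * walsh (S i) {}) = sum b I" by simp
  moreover have "(sum b I) ^ 4 \<le> 9 ^ d * ((sum b I)\<^sup>2)\<^sup>2"
    by (simp add: power_mult[symmetric] mult_le_cancel_right1 one_le_power)
  ultimately show ?case by (simp add: cube_avg_empty)
next
  case (insert v W)
  define I1 where "I1 = {i\<in>I. v \<notin> S i}"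
  define I2 where "I2 = {i\<in>I. v \<in> S i}"
  define g where "g A = (\<Sum>i\<in>I1. b i * walsh (S i) A)" for A
  define h where "h A = (\<Sum>i\<in>I2. b i * walsh (S i - {v}) A)" for A
  have finS: "finite (S i)" if "i \<in> I" for i
    using insert.prems(2) that insert(1) finite_subset by (metis finite_insert)
  have split: "(\<Sum>i\<in>I. b i * walsh (S i) A) = g A + h A"
    "(\<Sum>i\<in>I. b i * walsh (S i) (insert v A)) = g A - h A" if "A \<subseteq> W" for A
  proof -
    have "v \<notin> A" using that insert(2) by auto
    note ws = walsh_sum_split[of I S v A b, OF insert.prems(1) finS this]
    show "(\<Sum>i\<in>I. b i * walsh (S i) A) = g A + h A"
      unfolding g_def h_def I1_def I2_def by (rule ws(1))
    show "(\<Sum>i\<in>I. b i * walsh (S i) (insert v A)) = g A - h A"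
      unfolding g_def h_def I1_def I2_def by (rule ws(2))
  qed
  have "cube_avg W (\<lambda>A. (g A) ^ 4) \<le> 9 ^ d * (cube_avg W (\<lambda>A. (g A)\<^sup>2))\<^sup>2"
    unfolding g_def using insert.prems by (intro insert.IH) (auto simp: I1_def)
  then have IHg: "cube_avg W (\<lambda>A. (g A) ^ 4) \<le> 9 * (9 ^ d / 9) * (cube_avg W (\<lambda>A. (g A)\<^sup>2))\<^sup>2"
    by simp
  have IHh: "cube_avg W (\<lambda>A. (h A) ^ 4) \<le> 9 ^ d / 9 * (cube_avg W (\<lambda>A. (h A)\<^sup>2))\<^sup>2"
  proof (cases "d = 0")
    case True
    then have "I2 = {}" using insert.prems(2) finS by (auto simp: I2_def card_eq_0_iff)
    then show ?thesis unfolding h_def by (simp add: cube_avg_const[OF insert(1)])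
  next
    case False
    have "\<forall>i\<in>I2. S i - {v} \<subseteq> W \<and> card (S i - {v}) \<le> d - 1"
      using insert.prems(2) finS by (auto simp: I2_def card_Diff_singleton)
    then have "cube_avg W (\<lambda>A. (h A) ^ 4) \<le> 9 ^ (d - 1) * (cube_avg W (\<lambda>A. (h A)\<^sup>2))\<^sup>2"
      unfolding h_def using insert.prems(1) by (intro insert.IH) (auto simp: I2_def)
    moreover have "(9::real) ^ (d - 1) = 9 ^ d / 9" using False by (simp add: power_diff)
    ultimately show ?thesis by (simp only:)
  qed
  have "cube_avg (insert v W) (\<lambda>A. (\<Sum>i\<in>I. b i * walsh (S i) A) ^ 4)
      \<le> 9 * (9 ^ d / 9) * (cube_avg (insert v W) (\<lambda>A. (\<Sum>i\<in>I. b i * walsh (S i) A)\<^sup>2))\<^sup>2"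
    by (rule cube_avg_insert_fourth_moment_le[OF insert(1,2) _ _ IHg IHh]) (simp_all add: split)
  then show ?case by simp
qed

lemma cube_avg_square_sq_le:
  "(cube_avg V (\<lambda>A. (f A)\<^sup>2))\<^sup>2 \<le> cube_avg V (\<lambda>A. \<bar>f A\<bar>) * cube_avg V (\<lambda>A. \<bar>f A\<bar> ^ 3)"
proof -
  have "sqrt \<bar>x\<bar> * (\<bar>x\<bar> * sqrt \<bar>x\<bar>) = x\<^sup>2" for x :: real
  proof -
    have "sqrt \<bar>x\<bar> * (\<bar>x\<bar> * sqrt \<bar>x\<bar>) = \<bar>x\<bar> * (sqrt \<bar>x\<bar> * sqrt \<bar>x\<bar>)"
      by (simp only: mult.left_commute)
    then show ?thesis by (simp add: power2_eq_square)
  qed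
  then have "cube_avg V (\<lambda>A. (f A)\<^sup>2) = cube_avg V (\<lambda>A. sqrt \<bar>f A\<bar> * (\<bar>f A\<bar> * sqrt \<bar>f A\<bar>))"
    by (simp only:)
  moreover have "(\<bar>x\<bar> * sqrt \<bar>x\<bar>)\<^sup>2 = \<bar>x\<bar> ^ 3" for x :: real
  proof -
    have "(\<bar>x\<bar> * sqrt \<bar>x\<bar>)\<^sup>2 = \<bar>x\<bar>\<^sup>2 * \<bar>x\<bar>" by (simp add: power_mult_distrib)
    then show ?thesis by (simp add: power3_eq_cube power2_eq_square)
  qed
  moreover have "(sqrt \<bar>x\<bar>)\<^sup>2 = \<bar>x\<bar>" for x :: real by simp
  ultimately show ?thesis
    using cube_avg_Cauchy_Schwarz[of V "\<lambda>A. sqrt \<bar>f A\<bar>" "\<lambda>A. \<bar>f A\<bar> * sqrt \<bar>f A\<bar>"] by (simp only:)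
qed

lemma cube_avg_abs_cube_sq_le:
  "(cube_avg V (\<lambda>A. \<bar>f A\<bar> ^ 3))\<^sup>2 \<le> cube_avg V (\<lambda>A. (f A)\<^sup>2) * cube_avg V (\<lambda>A. (f A) ^ 4)"
proof -
  have "cube_avg V (\<lambda>A. \<bar>f A\<bar> ^ 3) = cube_avg V (\<lambda>A. \<bar>f A\<bar> * (f A)\<^sup>2)"
    by (rule cube_avg_cong) (simp add: power2_eq_square power3_eq_cube)
  then show ?thesis
    using cube_avg_Cauchy_Schwarz[of V "\<lambda>A. \<bar>f A\<bar>" "\<lambda>A. (f A)\<^sup>2"] by (simp add: power_mult[symmetric])
qed

text \<open>Interpolating \<open>L^3\<close> between \<open>L^2\<close> and \<open>L^4\<close>, and \<open>L^2\<close> between \<open>L^1\<close> and \<open>L^3\<close>, turns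
  a reverse \<open>L^4\<close>-\<open>L^2\<close> inequality into a reverse \<open>L^2\<close>-\<open>L^1\<close> one.\<close>

lemma cube_avg_l2_le_l1_of_l4:
  assumes "cube_avg V (\<lambda>A. (f A) ^ 4) \<le> C\<^sup>2 * (cube_avg V (\<lambda>A. (f A)\<^sup>2))\<^sup>2" "0 \<le> C"
  shows "sqrt (cube_avg V (\<lambda>A. (f A)\<^sup>2)) \<le> C * cube_avg V (\<lambda>A. \<bar>f A\<bar>)"
proof -
  define s where "s = cube_avg V (\<lambda>A. (f A)\<^sup>2)"
  define t where "t = cube_avg V (\<lambda>A. \<bar>f A\<bar>)"
  define u where "u = cube_avg V (\<lambda>A. \<bar>f A\<bar> ^ 3)"
  have s0: "0 \<le> s" unfolding s_def by (rule cube_avg_nonneg) simp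
  have t0: "0 \<le> t" unfolding t_def by (rule cube_avg_nonneg) simp
  show ?thesis
  proof (cases "s = 0")
    case True
    then show ?thesis unfolding s_def[symmetric] t_def[symmetric] using t0 assms(2) by simp
  next
    case False
    then have sp: "0 < s" using s0 by simp
    have "u\<^sup>2 \<le> s * (C\<^sup>2 * s\<^sup>2)"
      using cube_avg_abs_cube_sq_le[of V f] mult_left_mono[OF assms(1) s0]
      unfolding s_def u_def by linarith
    also have "\<dots> = (C * s * sqrt s)\<^sup>2"
      using s0 by (simp add: power_mult_distrib power2_eq_square)
    finally have "u \<le> C * s * sqrt s"
      by (rule power2_le_imp_le) (use s0 assms(2) in simp)
    then have "s\<^sup>2 \<le> t * (C * s * sqrt s)"
      using cube_avg_square_sq_le[of V f] t0 unfolding s_def t_def u_def by (meson mult_left_mono order.trans)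
    then have "s * s \<le> (C * t * sqrt s) * s" by (simp add: power2_eq_square algebra_simps)
    then have "s \<le> C * t * sqrt s" using sp by simp
    then have "sqrt s * sqrt s \<le> (C * t) * sqrt s" using s0 by simp
    moreover have "0 < sqrt s" using sp by simp
    ultimately have "sqrt s \<le> C * t" by (rule mult_right_le_imp_le)
    then show ?thesis unfolding s_def t_def .
  qed
qed

theorem walsh_chaos_khintchine:
  assumes "finite V" "finite I" "\<forall>i\<in>I. S i \<subseteq> V \<and> card (S i) \<le> d"
  shows "sqrt (cube_avg V (\<lambda>A. (\<Sum>i\<in>I. b i * walsh (S i) A)\<^sup>2))
           \<le> 3 ^ d * cube_avg V (\<lambda>A. \<bar>\<Sum>i\<in>I. b i * walsh (S i) A\<bar>)"
proof (rule cube_avg_l2_le_l1_of_l4)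
  have "((3::real) ^ d)\<^sup>2 = (3\<^sup>2) ^ d" by (metis power_mult mult.commute)
  then show "cube_avg V (\<lambda>A. (\<Sum>i\<in>I. b i * walsh (S i) A) ^ 4)
      \<le> (3 ^ d)\<^sup>2 * (cube_avg V (\<lambda>A. (\<Sum>i\<in>I. b i * walsh (S i) A)\<^sup>2))\<^sup>2"
    using bonami_inequality[OF assms] by simp
qed simp

lemma holder_inequality_sum:
  fixes a b :: "'j \<Rightarrow> real"
  assumes "1 < p" "1 < q" "1 / p + 1 / q = 1" "\<forall>j\<in>J. 0 \<le> a j" "\<forall>j\<in>J. 0 \<le> b j"
  shows "(\<Sum>j\<in>J. a j * b j) \<le> (\<Sum>j\<in>J. a j powr p) powr (1 / p) * (\<Sum>j\<in>J. b j powr q) powr (1 / q)"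
proof (cases "(\<Sum>j\<in>J. a j powr p) = 0 \<or> (\<Sum>j\<in>J. b j powr q) = 0")
  case True
  show ?thesis
  proof (cases "finite J")
    case True
    with \<open>_ \<or> _\<close> have "(\<forall>j\<in>J. a j = 0) \<or> (\<forall>j\<in>J. b j = 0)"
      using assms by (subst (asm) (1 2) sum_nonneg_eq_0_iff) auto
    then show ?thesis by auto
  qed simp
next
  case False
  define SA where "SA = (\<Sum>j\<in>J. a j powr p)"
  define SB where "SB = (\<Sum>j\<in>J. b j powr q)"
  have SA: "0 < SA" and SB: "0 < SB"
    using False assms unfolding SA_def SB_def by (simp_all add: sum_nonneg order.not_eq_order_implies_strict)
  define A where "A = SA powr (1 / p)"
  define B where "B = SB powr (1 / q)"
  have A: "0 < A" "A powr p = SA" using SA assms(1) by (auto simp: A_def powr_powr)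
  have B: "0 < B" "B powr q = SB" using SB assms(2) by (auto simp: B_def powr_powr)
  have "(a j / A) * (b j / B) \<le> a j powr p / SA / p + b j powr q / SB / q" if "j \<in> J" for j
  proof -
    have "(a j / A) * (b j / B) \<le> (a j / A) powr p / p + (b j / B) powr q / q"
      by (rule Youngs_inequality) (use assms that A B in auto)
    also have "(a j / A) powr p = a j powr p / SA" using A assms that by (simp add: powr_divide)
    also have "(b j / B) powr q = b j powr q / SB" using B assms that by (simp add: powr_divide)
    finally show ?thesis .
  qed
  then have "(\<Sum>j\<in>J. (a j / A) * (b j / B)) \<le> (\<Sum>j\<in>J. a j powr p / SA / p + b j powr q / SB / q)"
    by (rule sum_mono)
  also have "\<dots> = 1"
    using SA SB assms(3) by (simp add: sum.distrib sum_divide_distrib[symmetric] SA_def SB_def)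
  finally have "(\<Sum>j\<in>J. a j * b j) / (A * B) \<le> 1"
    by (simp add: sum_divide_distrib[symmetric] mult.commute mult.left_commute)
  then show ?thesis using A B by (simp add: A_def B_def SA_def SB_def pos_divide_le_eq)
qed

lemma powr_eq_mult_powr_diff: "0 \<le> (w::real) \<Longrightarrow> w powr r = w * w powr (r - 1)"
  by (cases "w = 0") (simp_all add: powr_mult_base)

lemma minkowski_inequality_sum:
  fixes u v :: "'i \<Rightarrow> real"
  assumes "1 \<le> r" "\<forall>i\<in>I. 0 \<le> u i" "\<forall>i\<in>I. 0 \<le> v i"
  shows "(\<Sum>i\<in>I. (u i + v i) powr r) powr (1 / r)
           \<le> (\<Sum>i\<in>I. u i powr r) powr (1 / r) + (\<Sum>i\<in>I. v i powr r) powr (1 / r)"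
proof (cases "r = 1")
  case True
  then show ?thesis using assms by (simp add: sum.distrib)
next
  case False
  then have r: "1 < r" using assms by simp
  define q where "q = r / (r - 1)"
  have q: "1 < q" "1 / r + 1 / q = 1" "(r - 1) * q = r" using r by (auto simp: q_def field_simps)
  define S where "S = (\<Sum>i\<in>I. (u i + v i) powr r)"
  define NU where "NU = (\<Sum>i\<in>I. u i powr r) powr (1 / r)"
  define NV where "NV = (\<Sum>i\<in>I. v i powr r) powr (1 / r)"
  have S0: "0 \<le> S" unfolding S_def by (simp add: sum_nonneg)
  show ?thesis
  proof (cases "S = 0")
    case True
    then show ?thesis unfolding S_def[symmetric] by simp
  next
    case False
    then have Sp: "0 < S" using S0 by simp
    have conj: "(\<Sum>i\<in>I. ((u i + v i) powr (r - 1)) powr q) = S"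
      unfolding S_def using q by (simp add: powr_powr)
    have "S = (\<Sum>i\<in>I. u i * (u i + v i) powr (r - 1)) + (\<Sum>i\<in>I. v i * (u i + v i) powr (r - 1))"
      unfolding S_def sum.distrib[symmetric] using assms
      by (intro sum.cong refl) (simp add: powr_eq_mult_powr_diff[of _ r] distrib_right)
    also have "\<dots> \<le> NU * S powr (1 / q) + NV * S powr (1 / q)"
      unfolding NU_def NV_def conj[symmetric] using assms r q
      by (intro add_mono holder_inequality_sum) auto
    finally have "S powr (1 / r) * S powr (1 / q) \<le> (NU + NV) * S powr (1 / q)"
      using q Sp by (simp add: powr_add[symmetric] distrib_right)
    then have "S powr (1 / r) \<le> NU + NV" using Sp by simp
    then show ?thesis unfolding S_def NU_def NV_def .
  qed
qed

lemma minkowski_inequality_sum_sum: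
  fixes u :: "'j \<Rightarrow> 'i \<Rightarrow> real"
  assumes "finite J" "1 \<le> r" "\<forall>j\<in>J. \<forall>i\<in>I. 0 \<le> u j i"
  shows "(\<Sum>i\<in>I. (\<Sum>j\<in>J. u j i) powr r) powr (1 / r) \<le> (\<Sum>j\<in>J. (\<Sum>i\<in>I. u j i powr r) powr (1 / r))"
  using assms(1,3)
proof (induction J rule: finite_induct)
  case (insert j J)
  have "(\<Sum>i\<in>I. (\<Sum>j'\<in>insert j J. u j' i) powr r) powr (1 / r)
      = (\<Sum>i\<in>I. (u j i + (\<Sum>j'\<in>J. u j' i)) powr r) powr (1 / r)"
    using insert by simp
  also have "\<dots> \<le> (\<Sum>i\<in>I. u j i powr r) powr (1 / r) + (\<Sum>i\<in>I. (\<Sum>j'\<in>J. u j' i) powr r) powr (1 / r)"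
    by (rule minkowski_inequality_sum) (use assms insert in \<open>auto intro: sum_nonneg\<close>)
  also have "\<dots> \<le> (\<Sum>i\<in>I. u j i powr r) powr (1 / r) + (\<Sum>j'\<in>J. (\<Sum>i\<in>I. u j' i powr r) powr (1 / r))"
    using insert by simp
  finally show ?case using insert by simp
qed simp

lemma cube_avg_abs_le_powr:
  assumes "finite V" "1 \<le> p"
  shows "cube_avg V (\<lambda>A. \<bar>f A\<bar>) \<le> (cube_avg V (\<lambda>A. \<bar>f A\<bar> powr p)) powr (1 / p)"
proof (cases "p = 1")
  case True
  have "0 \<le> cube_avg V (\<lambda>A. \<bar>f A\<bar>)" by (rule cube_avg_nonneg) simp
  then show ?thesis using True by simp
next
  case False
  then have p: "1 < p" using assms by simp
  define q where "q = p / (p - 1)"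
  have q: "1 < q" "1 / p + 1 / q = 1" using p by (auto simp: q_def field_simps)
  define K :: real where "K = 2 ^ card V"
  have K: "0 < K" "card (Pow V) = K" using assms(1) by (simp_all add: K_def card_Pow)
  have "(\<Sum>A\<in>Pow V. \<bar>f A\<bar> * 1) \<le> (\<Sum>A\<in>Pow V. \<bar>f A\<bar> powr p) powr (1 / p) * (\<Sum>A\<in>Pow V. (1::real) powr q) powr (1 / q)"
    by (rule holder_inequality_sum) (use p q in auto)
  then have "(\<Sum>A\<in>Pow V. \<bar>f A\<bar>) \<le> (\<Sum>A\<in>Pow V. \<bar>f A\<bar> powr p) powr (1 / p) * K powr (1 / q)"
    using K by simp
  moreover have "K powr (1 / q) = K / K powr (1 / p)"
    using q K by (simp add: field_simps flip: powr_add)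
  ultimately have "(\<Sum>A\<in>Pow V. \<bar>f A\<bar>) / K \<le> ((\<Sum>A\<in>Pow V. \<bar>f A\<bar> powr p) / K) powr (1 / p)"
    using K by (simp add: powr_divide sum_nonneg field_simps)
  then show ?thesis by (simp add: cube_avg_def K_def)
qed

lemma abs_powr_convex:
  fixes x y l p :: real
  assumes "1 \<le> p" "0 \<le> l" "l \<le> 1"
  shows "\<bar>l * x + (1 - l) * y\<bar> powr p \<le> l * \<bar>x\<bar> powr p + (1 - l) * \<bar>y\<bar> powr p"
proof -
  have "\<bar>l * x + (1 - l) * y\<bar> \<le> l * \<bar>x\<bar> + (1 - l) * \<bar>y\<bar>"
    using assms by (metis abs_mult abs_of_nonneg abs_triangle_ineq diff_ge_0_iff_ge)
  then have "\<bar>l * x + (1 - l) * y\<bar> powr p \<le> (l * \<bar>x\<bar> + (1 - l) * \<bar>y\<bar>) powr p"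
    using assms by (intro powr_mono2) auto
  also have "\<dots> \<le> l * \<bar>x\<bar> powr p + (1 - l) * \<bar>y\<bar> powr p"
  proof (cases "x = 0 \<or> y = 0")
    case True
    have "(c * t) powr p \<le> c * t powr p" if "0 \<le> c" "c \<le> 1" "0 \<le> t" for c t :: real
    proof -
      have "c powr p \<le> c" using that assms(1) by (cases "c = 0") (auto intro: powr_le_one_le)
      then show ?thesis using that by (simp add: powr_mult mult_right_mono)
    qed
    then show ?thesis using True assms by auto
  next
    case False
    then have "\<bar>x\<bar> \<in> {0<..}" "\<bar>y\<bar> \<in> {0<..}" by auto
    then show ?thesis
      using convex_onD[OF powr_convex[OF assms(1)], of "1 - l" "\<bar>x\<bar>" "\<bar>y\<bar>"] assms
      by (simp add: add.commute)
  qed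
  finally show ?thesis .
qed

theorem walsh_chaos_khintchine_powr:
  assumes "finite V" "finite I" "\<forall>i\<in>I. S i \<subseteq> V \<and> card (S i) \<le> d" "inj_on S I" "1 \<le> p"
  shows "sqrt (\<Sum>i\<in>I. (b i)\<^sup>2) \<le> 3 ^ d * (cube_avg V (\<lambda>A. \<bar>\<Sum>i\<in>I. b i * walsh (S i) A\<bar> powr p)) powr (1 / p)"
proof -
  have "(\<Sum>i\<in>I. (b i)\<^sup>2) = cube_avg V (\<lambda>A. (\<Sum>i\<in>I. b i * walsh (S i) A)\<^sup>2)"
    using assms by (intro cube_avg_walsh_sum_square[symmetric]) auto
  then have "sqrt (\<Sum>i\<in>I. (b i)\<^sup>2) \<le> 3 ^ d * cube_avg V (\<lambda>A. \<bar>\<Sum>i\<in>I. b i * walsh (S i) A\<bar>)"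
    using walsh_chaos_khintchine[OF assms(1-3)] by simp
  also have "\<dots> \<le> 3 ^ d * (cube_avg V (\<lambda>A. \<bar>\<Sum>i\<in>I. b i * walsh (S i) A\<bar> powr p)) powr (1 / p)"
    by (rule mult_left_mono[OF cube_avg_abs_le_powr[OF assms(1,5)]]) simp
  finally show ?thesis .
qed

definition support_below :: "nat \<Rightarrow> (nat \<Rightarrow> real) \<Rightarrow> bool" where
  "support_below N u \<longleftrightarrow> (\<forall>n\<ge>N. u n = 0)"

lemma support_below_slot_space: "support_below N u \<Longrightarrow> u \<in> slot_space q k"
proof -
  assume u: "support_below N u"
  then have "u \<in> c0_space"
    unfolding c0_space_def support_below_def
    by (intro CollectI tendsto_eventually eventually_sequentiallyI[of N]) auto
  moreover have "u \<in> lq_space r" for r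
    using u unfolding lq_space_def support_below_def
    by (intro CollectI summable_finite[of "{..<N}"]) (auto simp: not_less)
  ultimately show ?thesis unfolding slot_space_def X_space_def by auto
qed

lemma support_below_unit_vec: "j < N \<Longrightarrow> support_below N (unit_vec j)"
  unfolding support_below_def unit_vec_def by auto

lemma support_below_sum: "\<forall>j\<in>J. support_below N (u j) \<Longrightarrow> support_below N (\<lambda>n. \<Sum>j\<in>J. c j * u j n)"
  unfolding support_below_def by auto

lemma sum_unit_vec: "(\<lambda>n. \<Sum>j<N. b j * unit_vec j n) = (\<lambda>n. if n < N then b n else 0)"
proof
  fix n
  show "(\<Sum>j<N. b j * unit_vec j n) = (if n < N then b n else 0)"
    by (cases "n < N") (auto simp: unit_vec_def sum.remove[of _ n])
qed

lemma support_below_expansion: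
  assumes "support_below N u"
  shows "u = (\<lambda>n. \<Sum>j<N. u j * unit_vec j n)"
  using assms unfolding sum_unit_vec support_below_def by (auto simp: not_less)

lemma lq_norm_support_below:
  assumes "support_below N u"
  shows "lq_norm r u = (\<Sum>n<N. \<bar>u n\<bar> powr r) powr (1 / r)"
proof -
  have "(\<Sum>n. \<bar>u n\<bar> powr r) = (\<Sum>n<N. \<bar>u n\<bar> powr r)"
    by (rule suminf_finite) (use assms in \<open>auto simp: support_below_def\<close>)
  then show ?thesis unfolding lq_norm_def by simp
qed

lemma lq_partial_sum_le_lq_norm:
  assumes "u \<in> lq_space r" "0 < r"
  shows "(\<Sum>n<N. \<bar>u n\<bar> powr r) powr (1 / r) \<le> lq_norm r u"
proof -
  have "(\<Sum>n<N. \<bar>u n\<bar> powr r) \<le> (\<Sum>n. \<bar>u n\<bar> powr r)"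
    by (rule sum_le_suminf) (use assms in \<open>auto simp: lq_space_def\<close>)
  then show ?thesis unfolding lq_norm_def using assms
    by (intro powr_mono2) (auto intro: sum_nonneg)
qed

lemma abs_le_c0_norm:
  assumes "u \<in> c0_space"
  shows "\<bar>u n\<bar> \<le> c0_norm u"
proof -
  have "Bseq u" using assms unfolding c0_space_def by (intro convergent_imp_Bseq convergentI) simp
  then obtain K where "\<forall>n. norm (u n) \<le> K" using BseqE by metis
  then show ?thesis unfolding c0_norm_def by (intro cSUP_upper bdd_aboveI2) auto
qed

lemma c0_norm_le: "(\<And>n. \<bar>u n\<bar> \<le> B) \<Longrightarrow> c0_norm u \<le> B"
  unfolding c0_norm_def by (rule cSUP_least) auto

lemma conj_exp_conj_ereal: "1 \<le> p \<Longrightarrow> conj_exp (conj_ereal p) = p"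
  unfolding conj_exp_def conj_ereal_def by (auto simp: field_simps)

lemma unit_tuples_abs_le_1:
  assumes "x \<in> unit_tuples M q" "1 \<le> k" "k < M"
  shows "\<bar>x k n\<bar> \<le> 1"
proof -
  have "x k \<in> c0_space" "c0_norm (x k) \<le> 1"
    using assms unfolding unit_tuples_def tuples_def slot_space_def slot_norm_def by auto
  then show ?thesis using abs_le_c0_norm[of "x k" n] by linarith
qed

lemma unit_tuples_abs_le_1_first:
  assumes "x \<in> unit_tuples M \<infinity>" "0 < M"
  shows "\<bar>x 0 n\<bar> \<le> 1"
proof -
  have "x 0 \<in> c0_space" "c0_norm (x 0) \<le> 1"
    using assms unfolding unit_tuples_def tuples_def slot_space_def slot_norm_def X_space_def X_norm_def
    by auto
  then show ?thesis using abs_le_c0_norm[of "x 0" n] by linarith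
qed

lemma unit_tuples_lq_norm_first:
  assumes "x \<in> unit_tuples M (ereal r)" "0 < M"
  shows "x 0 \<in> lq_space r" "lq_norm r (x 0) \<le> 1"
  using assms unfolding unit_tuples_def tuples_def slot_space_def slot_norm_def X_space_def X_norm_def
  by auto

lemma zero_in_unit_tuples: "(\<lambda>k. (\<lambda>_. 0::real)) \<in> unit_tuples M q"
proof -
  have fs: "support_below 0 (\<lambda>_. 0::real)" by (simp add: support_below_def)
  have "c0_norm (\<lambda>_. 0::real) \<le> 1" by (rule c0_norm_le) simp
  moreover have "lq_norm r (\<lambda>_. 0::real) \<le> 1" for r by (simp add: lq_norm_support_below[OF fs])
  ultimately show ?thesis unfolding unit_tuples_def tuples_def
    using support_below_slot_space[OF fs] by (auto simp: slot_norm_def X_norm_def)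
qed

lemma abs_le_form_norm:
  assumes "cont_multilinear_form M q T" "x \<in> unit_tuples M q"
  shows "\<bar>T x\<bar> \<le> form_norm M q T"
  using assms unfolding cont_multilinear_form_def form_norm_def by (intro cSUP_upper) auto

lemma form_norm_nonneg: "cont_multilinear_form M q T \<Longrightarrow> 0 \<le> form_norm M q T"
  using abs_le_form_norm[OF _ zero_in_unit_tuples] by (meson abs_ge_zero order.trans)

lemma form_norm_le:
  assumes "\<And>x. x \<in> unit_tuples M q \<Longrightarrow> \<bar>T x\<bar> \<le> B"
  shows "form_norm M q T \<le> B"
  unfolding form_norm_def using zero_in_unit_tuples assms by (intro cSUP_least) auto

lemma multilinear_form_slot_linear:
  assumes "multilinear_form M q T" "x \<in> tuples M q" "k < M" "u \<in> slot_space q k" "v \<in> slot_space q k"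
  shows "T (x(k := (\<lambda>n. a * u n + b * v n))) = a * T (x(k := u)) + b * T (x(k := v))"
  using assms unfolding multilinear_form_def by blast

lemma multilinear_form_sum_slot:
  assumes "multilinear_form M q T" "x \<in> tuples M q" "k < M" "finite J" "\<forall>j\<in>J. support_below N (u j)"
  shows "T (x(k := (\<lambda>n. \<Sum>j\<in>J. c j * u j n))) = (\<Sum>j\<in>J. c j * T (x(k := u j)))"
  using assms(4,5)
proof (induction J rule: finite_induct)
  case empty
  have "support_below 0 (\<lambda>_. 0::real)" by (simp add: support_below_def)
  then have "T (x(k := (\<lambda>n. 0 * 0 + 0 * 0))) = 0"
    using multilinear_form_slot_linear[OF assms(1-3), of "\<lambda>_. 0" "\<lambda>_. 0" 0 0]
    by (simp add: support_below_slot_space)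
  then show ?case by (simp add: fun_upd_def)
next
  case (insert j J)
  have e: "(\<lambda>n. \<Sum>j'\<in>insert j J. c j' * u j' n) = (\<lambda>n. c j * u j n + 1 * (\<Sum>j'\<in>J. c j' * u j' n))"
    using insert by simp
  have split: "T (x(k := (\<lambda>n. c j * u j n + 1 * (\<Sum>j'\<in>J. c j' * u j' n))))
      = c j * T (x(k := u j)) + 1 * T (x(k := (\<lambda>n. \<Sum>j'\<in>J. c j' * u j' n)))"
    using insert by (intro multilinear_form_slot_linear[OF assms(1-3)] support_below_slot_space support_below_sum) auto
  have IH: "T (x(k := (\<lambda>n. \<Sum>j'\<in>J. c j' * u j' n))) = (\<Sum>j'\<in>J. c j' * T (x(k := u j')))"
    using insert.IH insert.prems by (simp add: fun_upd_def)
  show ?case unfolding e split IH by (simp add: sum.insert[OF insert(1,2)] fun_upd_def)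
qed

lemma sum_PiE_insert:
  assumes "x \<notin> S"
  shows "(\<Sum>g\<in>PiE (insert x S) B. F g) = (\<Sum>y\<in>B x. \<Sum>g\<in>PiE S B. F (g(x := y)))"
proof -
  have "(\<Sum>g\<in>PiE (insert x S) B. F g) = (\<Sum>(y,g)\<in>B x \<times> PiE S B. F (g(x := y)))"
    using assms
    by (intro sum.reindex_bij_witness[of _ "\<lambda>(y,g). g(x := y)" "\<lambda>g. (g x, g(x := undefined))"])
       (auto simp: PiE_def extensional_def)
  also have "\<dots> = (\<Sum>y\<in>B x. \<Sum>g\<in>PiE S B. F (g(x := y)))"
    by (subst sum.cartesian_product) auto
  finally show ?thesis .
qed
lemma multilinear_form_expand_slot:
  assumes "multilinear_form M q T" "y \<in> tuples M q" "k < M" "support_below N (y k)"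
  shows "T y = (\<Sum>n<N. y k n * T (y(k := unit_vec n)))"
proof -
  have "T y = T (y(k := (\<lambda>n'. \<Sum>n<N. y k n * unit_vec n n')))"
    using support_below_expansion[OF assms(4)] by (metis fun_upd_triv)
  also have "\<dots> = (\<Sum>n<N. y k n * T (y(k := unit_vec n)))"
    by (rule multilinear_form_sum_slot[OF assms(1-3)]) (auto intro: support_below_unit_vec)
  finally show ?thesis .
qed

lemma multilinear_form_expand_slots:
  assumes ml: "multilinear_form M q T" and x: "x \<in> tuples M q"
    and fs: "\<forall>k\<in>{1..<M}. support_below N (x k)" and "s < M"
  shows "T x = (\<Sum>i\<in>{1..s} \<rightarrow>\<^sub>E {..<N}.
           (\<Prod>k\<in>{1..s}. x k (i k)) * T (\<lambda>k. if k \<in> {1..s} then unit_vec (i k) else x k))"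
  using \<open>s < M\<close>
proof (induction s)
  case (Suc s)
  define y where "y i k = (if k \<in> {1..s} then unit_vec (i k) else x k)" for i k
  define F where "F i = (\<Prod>k\<in>{1..Suc s}. x k (i k)) *
    T (\<lambda>k. if k \<in> {1..Suc s} then unit_vec (i k) else x k)" for i
  have y_upd: "(y i)(Suc s := unit_vec n) = (\<lambda>k. if k \<in> {1..Suc s} then unit_vec ((i(Suc s := n)) k) else x k)"
    for i n unfolding y_def by auto
  have prod_upd: "(\<Prod>k\<in>{1..Suc s}. x k ((i(Suc s := n)) k)) = x (Suc s) n * (\<Prod>k\<in>{1..s}. x k (i k))"
    for i n
  proof -
    have "(\<Prod>k\<in>{1..s}. x k ((i(Suc s := n)) k)) = (\<Prod>k\<in>{1..s}. x k (i k))"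
      by (intro prod.cong) auto
    then show ?thesis by (simp add: atLeastAtMostSuc_conv)
  qed
  have y_tuple: "y i \<in> tuples M q" if "i \<in> {1..s} \<rightarrow>\<^sub>E {..<N}" for i
    using x Suc.prems that unfolding y_def tuples_def
    by (auto intro!: support_below_slot_space[of N] support_below_unit_vec)
  have y_Suc: "y i (Suc s) = x (Suc s)" for i unfolding y_def by simp
  have step: "T (y i) = (\<Sum>n<N. x (Suc s) n * T ((y i)(Suc s := unit_vec n)))"
    if "i \<in> {1..s} \<rightarrow>\<^sub>E {..<N}" for i
  proof -
    have "T (y i) = (\<Sum>n<N. y i (Suc s) n * T ((y i)(Suc s := unit_vec n)))"
      by (rule multilinear_form_expand_slot[OF ml y_tuple[OF that] Suc.prems]) (use fs Suc.prems y_Suc in simp)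
    then show ?thesis by (simp only: y_Suc)
  qed
  have "T x = (\<Sum>i\<in>{1..s} \<rightarrow>\<^sub>E {..<N}. (\<Prod>k\<in>{1..s}. x k (i k)) * T (y i))"
    unfolding y_def by (rule Suc.IH) (use Suc.prems in simp)
  also have "\<dots> = (\<Sum>i\<in>{1..s} \<rightarrow>\<^sub>E {..<N}. \<Sum>n<N. F (i(Suc s := n)))"
  proof (rule sum.cong[OF refl])
    fix i assume "i \<in> {1..s} \<rightarrow>\<^sub>E {..<N}"
    then show "(\<Prod>k\<in>{1..s}. x k (i k)) * T (y i) = (\<Sum>n<N. F (i(Suc s := n)))"
      unfolding step[OF \<open>i \<in> _\<close>] sum_distrib_left F_def y_upd prod_upd by (simp only: mult_ac)
  qed
  also have "\<dots> = (\<Sum>n<N. \<Sum>i\<in>{1..s} \<rightarrow>\<^sub>E {..<N}. F (i(Suc s := n)))"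
    by (rule sum.swap)
  also have "\<dots> = (\<Sum>i\<in>{1..Suc s} \<rightarrow>\<^sub>E {..<N}. F i)"
    using sum_PiE_insert[of "Suc s" "{1..s}" F "\<lambda>_. {..<N}"] by (simp add: atLeastAtMostSuc_conv)
  finally show ?case unfolding F_def .
qed simp

lemma multilinear_form_coeff_expansion:
  assumes ml: "multilinear_form M q T" and x: "x \<in> tuples M q"
    and fs: "\<forall>k\<in>{1..<M}. support_below N (x k)" and "1 \<le> M" "x 0 = unit_vec j"
  shows "T x = (\<Sum>i\<in>{1..<M} \<rightarrow>\<^sub>E {..<N}. (\<Prod>k\<in>{1..<M}. x k (i k)) * coeff M T j i)"
proof -
  have M: "{1..M - 1} = {1..<M}" using \<open>1 \<le> M\<close> by auto
  have "(\<lambda>k. if k \<in> {1..<M} then unit_vec (i k) else x k) =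
      (\<lambda>k. if k = 0 then unit_vec j else if k < M then unit_vec (i k) else (\<lambda>_. 0))" for i
    using x \<open>x 0 = unit_vec j\<close> unfolding tuples_def by auto
  then show ?thesis
    using multilinear_form_expand_slots[OF ml x fs, of "M - 1"] \<open>1 \<le> M\<close> unfolding M coeff_def by simp
qed

lemma multilinear_form_polynomial:
  fixes T :: "(nat \<Rightarrow> nat \<Rightarrow> real) \<Rightarrow> real" and c :: "'t \<Rightarrow> real"
  assumes "\<And>x. T x = (\<Sum>\<tau>\<in>\<Phi>. c \<tau> * (\<Prod>k<M. x k (\<iota> \<tau> k)))"
  shows "multilinear_form M q T"
  unfolding multilinear_form_def
proof (intro ballI allI impI)
  fix x :: "nat \<Rightarrow> nat \<Rightarrow> real" and k and u v :: "nat \<Rightarrow> real" and a b :: real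
  assume k: "k < M"
  have pr: "(\<Prod>k'<M. (x(k := w)) k' (\<iota> \<tau> k')) = w (\<iota> \<tau> k) * (\<Prod>k'\<in>{..<M} - {k}. x k' (\<iota> \<tau> k'))"
    for w :: "nat \<Rightarrow> real" and \<tau>
    using k by (subst prod.remove[of _ k]) (auto intro!: prod.cong)
  show "T (x(k := (\<lambda>n. a * u n + b * v n))) = a * T (x(k := u)) + b * T (x(k := v))"
    unfolding assms pr by (simp add: sum_distrib_left sum.distrib[symmetric] algebra_simps)
qed

section \<open>Rademacher chaos as an average over the discrete cube\<close>

text \<open>Off a null set, \<open>rademacher l (t k)\<close> with \<open>l \<le> N\<close> is constant on the dyadic boxes of side
  \<open>2^-N\<close>, and equals \<open>-1\<close> exactly when the \<open>l\<close>-th binary digit of \<open>t k\<close> is \<open>1\<close>.  The boxes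
  have equal measure and correspond bijectively, via their digit sets, to the subsets of
  \<open>{1..m} \<times> {1..N}\<close>; hence integrals of functions of these Rademacher values are cube averages.\<close>

definition dyadic_generic :: "nat \<Rightarrow> real \<Rightarrow> bool" where
  "dyadic_generic N x \<longleftrightarrow> 0 \<le> x \<and> x < 1 \<and> (\<forall>z::int. 2^N * x \<noteq> of_int z)"

definition dyadic_index :: "nat \<Rightarrow> real \<Rightarrow> nat" where "dyadic_index N x = nat \<lfloor>2^N * x\<rfloor>"

lemma sin_pi_int_add: "sin (pi * (of_int n + f)) = (if even n then 1 else -1) * sin (pi * f)"
proof -
  have "sin (pi * (of_int n + f)) = sin (pi * of_int n + pi * f)" by (simp add: algebra_simps)
  also have "\<dots> = sin (pi * of_int n) * cos (pi * f) + cos (pi * of_int n) * sin (pi * f)" by (rule sin_add)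
  also have "\<dots> = (if even n then 1 else -1) * sin (pi * f)" by simp
  finally show ?thesis .
qed

lemma rademacher_eq_parity_floor:
  assumes "\<forall>z::int. 2^l * x \<noteq> of_int z"
  shows "rademacher l x = (if odd \<lfloor>2^l * x\<rfloor> then -1 else 1)"
proof -
  define w where "w = 2^l * x"
  define n where "n = \<lfloor>w\<rfloor>"
  define f where "f = w - of_int n"
  have f0: "0 < f"
  proof -
    have "0 \<le> f" unfolding f_def n_def by simp
    moreover have "f \<noteq> 0" using assms unfolding f_def n_def w_def by auto
    ultimately show ?thesis by simp
  qed
  have f1: "f < 1" unfolding f_def n_def by linarith
  have sp: "0 < sin (pi * f)" using f0 f1 by (intro sin_gt_zero) auto
  have "rademacher l x = sgn (sin (pi * (of_int n + f)))"
    unfolding rademacher_def f_def w_def by (simp add: algebra_simps)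
  also have "\<dots> = (if even n then 1 else -1)" using sp by (simp add: sin_pi_int_add sgn_mult)
  finally show ?thesis unfolding n_def w_def by simp
qed

lemma dyadic_generic_not_int:
  assumes "dyadic_generic N x" "l \<le> N"
  shows "\<forall>z::int. 2^l * x \<noteq> of_int z"
proof (intro allI notI)
  fix z :: int assume h: "2^l * x = of_int z"
  have "(2::real)^N * x = 2^(N-l) * (2^l * x)"
    using assms(2) by (simp add: power_add[symmetric] mult.assoc[symmetric])
  also have "\<dots> = of_int (2^(N-l) * z)" using h by simp
  finally show False using assms(1) unfolding dyadic_generic_def by blast
qed

lemma floor_pow2_mult_eq_div:
  assumes "0 \<le> x" "l \<le> N"
  shows "\<lfloor>(2::real)^l * x\<rfloor> = \<lfloor>2^N * x\<rfloor> div 2^(N-l)"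
proof -
  have e1: "real_of_int (2^(N-l)) = (2::real)^(N-l)" by simp
  have e2: "(2::real)^N = 2^l * 2^(N-l)" using assms(2) by (simp add: power_add[symmetric])
  have "(2::real)^l * x = 2^N * x / real_of_int (2^(N-l))"
    unfolding e1 e2 by simp
  then show ?thesis using floor_divide_real_eq_div[of "2^(N-l)" "2^N * x"] by simp
qed

lemma rademacher_eq_parity_dyadic_index:
  assumes "dyadic_generic N x" "l \<le> N"
  shows "rademacher l x = (if odd (dyadic_index N x div 2^(N-l)) then -1 else 1)"
proof -
  have x0: "0 \<le> x" using assms unfolding dyadic_generic_def by simp
  have "rademacher l x = (if odd \<lfloor>2^l * x\<rfloor> then -1 else 1)"
    by (rule rademacher_eq_parity_floor[OF dyadic_generic_not_int[OF assms]])
  also have "\<lfloor>(2::real)^l * x\<rfloor> = \<lfloor>2^N * x\<rfloor> div 2^(N-l)" by (rule floor_pow2_mult_eq_div[OF x0 assms(2)])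
  also have "\<lfloor>(2::real)^N * x\<rfloor> = int (dyadic_index N x)" unfolding dyadic_index_def using x0 by simp
  also have "int (dyadic_index N x) div 2^(N-l) = int (dyadic_index N x div 2^(N-l))" by (simp add: zdiv_int)
  finally show ?thesis by simp
qed

lemma eq_if_binary_digits_eq:
  fixes a b :: nat
  shows "a < 2^N \<Longrightarrow> b < 2^N \<Longrightarrow> (\<forall>j<N. odd (a div 2^j) = odd (b div 2^j)) \<Longrightarrow> a = b"
proof (induction N arbitrary: a b)
  case 0 then show ?case by simp
next
  case (Suc N)
  have "a div 2 = b div 2"
  proof (rule Suc.IH)
    show "a div 2 < 2^N" "b div 2 < 2^N" using Suc.prems by auto
    show "\<forall>j<N. odd (a div 2 div 2^j) = odd (b div 2 div 2^j)"
      using Suc.prems(3) by (auto simp: div_mult2_eq[symmetric] power_Suc[symmetric] simp del: power_Suc)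
  qed
  moreover have "odd a = odd b" using Suc.prems(3)[rule_format, of 0] by simp
  ultimately show ?case by (metis div_mult_mod_eq odd_iff_mod_2_eq_one parity_cases)
qed

interpretation unit_interval: product_sigma_finite "\<lambda>_::nat. restrict_space lborel {0..1::real}"
  by (rule product_sigma_finite.intro, rule sigma_finite_measure_restrict_space[OF lborel.sigma_finite_measure_axioms]) simp

abbreviation unit_cube :: "nat \<Rightarrow> (nat \<Rightarrow> real) measure" where
  "unit_cube m \<equiv> Pi\<^sub>M {1..m} (\<lambda>_. restrict_space lborel {0..1::real})"

definition dyadic_box :: "nat \<Rightarrow> nat \<Rightarrow> (nat \<Rightarrow> nat) \<Rightarrow> (nat \<Rightarrow> real) set" where
  "dyadic_box N m \<kappa> = PiE {1..m} (\<lambda>k. {real (\<kappa> k) / 2^N ..< (real (\<kappa> k) + 1) / 2^N})"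

definition dyadic_labels :: "nat \<Rightarrow> nat \<Rightarrow> (nat \<Rightarrow> nat) set" where
  "dyadic_labels N m = PiE {1..m} (\<lambda>_. {..<2^N})"

definition digit_set :: "nat \<Rightarrow> nat \<Rightarrow> (nat \<Rightarrow> nat) \<Rightarrow> (nat \<times> nat) set" where
  "digit_set N m \<kappa> = {(k, l) \<in> {1..m} \<times> {1..N}. odd (\<kappa> k div 2^(N-l))}"

lemma space_unit_cube: "space (unit_cube m) = PiE {1..m} (\<lambda>_. {0..1})"
  by (simp add: space_PiM)

lemma dyadic_interval_subset:
  assumes "c < (2::nat)^N"
  shows "{real c / 2^N ..< (real c + 1) / 2^N} \<subseteq> {0..1::real}"
proof -
  have "real c + 1 \<le> 2^N" using assms by (metis Suc_leI of_nat_Suc of_nat_le_iff of_nat_numeral of_nat_power add.commute)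
  then have h1: "(real c + 1) / 2^N \<le> 1" by simp
  have h0: "0 \<le> real c / 2^N" by simp
  show ?thesis
  proof
    fix x assume "x \<in> {real c / 2^N ..< (real c + 1) / 2^N}"
    then have a: "real c / 2^N \<le> x" and b: "x < (real c + 1) / 2^N" by auto
    show "x \<in> {0..1}" unfolding atLeastAtMost_iff using a b h0 h1 by linarith
  qed
qed

lemma dyadic_interval_sets:
  assumes "c < (2::nat)^N"
  shows "{real c / 2^N ..< (real c + 1) / 2^N} \<in> sets (restrict_space lborel {0..1::real})"
  using dyadic_interval_subset[OF assms] by (subst sets_restrict_space_iff) auto

lemma emeasure_dyadic_interval:
  assumes "c < (2::nat)^N"
  shows "emeasure (restrict_space lborel {0..1::real}) {real c / 2^N ..< (real c + 1) / 2^N} = ennreal (1 / 2^N)"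
proof -
  have "emeasure (restrict_space lborel {0..1::real}) {real c / 2^N ..< (real c + 1) / 2^N}
      = emeasure lborel {real c / 2^N ..< (real c + 1) / 2^N}"
    using dyadic_interval_subset[OF assms] by (subst emeasure_restrict_space) auto
  also have "\<dots> = ennreal ((real c + 1) / 2^N - real c / 2^N)"
    by (subst emeasure_lborel_Ico) (auto simp: divide_right_mono)
  also have "(real c + 1) / 2^N - real c / 2^N = 1 / 2^N" by (simp add: diff_divide_distrib[symmetric])
  finally show ?thesis .
qed

lemma dyadic_box_sets: "\<kappa> \<in> dyadic_labels N m \<Longrightarrow> dyadic_box N m \<kappa> \<in> sets (unit_cube m)"
  unfolding dyadic_box_def dyadic_labels_def by (intro sets_PiM_I_finite dyadic_interval_sets) auto

lemma dyadic_box_subset: "\<kappa> \<in> dyadic_labels N m \<Longrightarrow> dyadic_box N m \<kappa> \<subseteq> space (unit_cube m)"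
  unfolding dyadic_box_def dyadic_labels_def space_unit_cube using dyadic_interval_subset by (intro subset_PiE[THEN iffD2]) auto

lemma emeasure_dyadic_box: "\<kappa> \<in> dyadic_labels N m \<Longrightarrow> emeasure (unit_cube m) (dyadic_box N m \<kappa>) = ennreal ((1 / 2^N)^m)"
proof -
  assume k: "\<kappa> \<in> dyadic_labels N m"
  have "emeasure (unit_cube m) (dyadic_box N m \<kappa>) = (\<Prod>k\<in>{1..m}. emeasure (restrict_space lborel {0..1::real}) {real (\<kappa> k) / 2^N ..< (real (\<kappa> k) + 1) / 2^N})"
    unfolding dyadic_box_def using k by (intro unit_interval.emeasure_PiM dyadic_interval_sets) (auto simp: dyadic_labels_def)
  also have "\<dots> = (\<Prod>k\<in>{1..m}. ennreal (1 / 2^N))"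
    using k by (intro prod.cong refl emeasure_dyadic_interval) (auto simp: dyadic_labels_def)
  also have "\<dots> = ennreal ((1 / 2^N)^m)" by (simp add: prod_ennreal[symmetric] ennreal_power)
  finally show ?thesis .
qed

lemma measure_dyadic_box: "\<kappa> \<in> dyadic_labels N m \<Longrightarrow> measure (unit_cube m) (dyadic_box N m \<kappa>) = (1 / 2^N)^m"
  using emeasure_dyadic_box[of \<kappa> N m] by (simp add: measure_def)

lemma finite_dyadic_labels: "finite (dyadic_labels N m)"
  unfolding dyadic_labels_def by (intro finite_PiE) auto

lemma integral_dyadic_step_function:
  fixes c :: "(nat \<Rightarrow> nat) \<Rightarrow> real"
  shows "integral\<^sup>L (unit_cube m) (\<lambda>t. \<Sum>\<kappa>\<in>dyadic_labels N m. c \<kappa> * indicator (dyadic_box N m \<kappa>) t) = (\<Sum>\<kappa>\<in>dyadic_labels N m. c \<kappa> * (1 / 2^N)^m)"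
proof -
  have int: "integrable (unit_cube m) (\<lambda>t. c \<kappa> * indicator (dyadic_box N m \<kappa>) t)" if "\<kappa> \<in> dyadic_labels N m" for \<kappa>
  proof -
    have "integrable (unit_cube m) (indicator (dyadic_box N m \<kappa>) :: _ \<Rightarrow> real)"
      by (rule integrable_real_indicator[OF dyadic_box_sets[OF that]]) (unfold emeasure_dyadic_box[OF that], simp)
    then show ?thesis by simp
  qed
  have "integral\<^sup>L (unit_cube m) (\<lambda>t. \<Sum>\<kappa>\<in>dyadic_labels N m. c \<kappa> * indicator (dyadic_box N m \<kappa>) t)
     = (\<Sum>\<kappa>\<in>dyadic_labels N m. integral\<^sup>L (unit_cube m) (\<lambda>t. c \<kappa> * indicator (dyadic_box N m \<kappa>) t))"
    by (rule Bochner_Integration.integral_sum[where f = "\<lambda>\<kappa> t. c \<kappa> * (indicator (dyadic_box N m \<kappa>) t :: real)"]) (use int in auto)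
  also have "\<dots> = (\<Sum>\<kappa>\<in>dyadic_labels N m. c \<kappa> * (1 / 2^N)^m)"
  proof (intro sum.cong refl)
    fix \<kappa> assume k: "\<kappa> \<in> dyadic_labels N m"
    have "integral\<^sup>L (unit_cube m) (indicator (dyadic_box N m \<kappa>) :: _ \<Rightarrow> real) = measure (unit_cube m) (dyadic_box N m \<kappa> \<inter> space (unit_cube m))"
      by (rule Bochner_Integration.integral_indicator)
    also have "dyadic_box N m \<kappa> \<inter> space (unit_cube m) = dyadic_box N m \<kappa>" using dyadic_box_subset[OF k] by auto
    finally show "integral\<^sup>L (unit_cube m) (\<lambda>t. c \<kappa> * indicator (dyadic_box N m \<kappa>) t) = c \<kappa> * (1 / 2^N)^m"
      using measure_dyadic_box[OF k] by simp
  qed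
  finally show ?thesis .
qed

lemma prob_space_unit_interval: "prob_space (restrict_space lborel {0..1::real})"
  by (rule prob_spaceI) (simp add: space_restrict_space emeasure_restrict_space)

lemma AE_dyadic_generic_interval: "AE x in restrict_space lborel {0..1}. dyadic_generic N x"
proof -
  have "{x \<in> {0..1::real}. \<not> dyadic_generic N x} \<subseteq> insert 1 (range (\<lambda>z::int. of_int z / 2 ^ N))"
  proof safe
    fix x :: real assume "x \<in> {0..1}" "\<not> dyadic_generic N x" "x \<notin> range (\<lambda>z::int. of_int z / 2 ^ N)"
    moreover have "2 ^ N * x = of_int z \<Longrightarrow> x = of_int z / 2 ^ N" for z :: int
      by (simp add: field_simps)
    ultimately show "x = 1" unfolding dyadic_generic_def by fastforce
  qed
  moreover have "insert 1 (range (\<lambda>z::int. of_int z / 2 ^ N)) \<in> null_sets lborel"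
    by (intro countable_imp_null_set_lborel) auto
  ultimately have "AE x in lborel. x \<in> {0..1} \<longrightarrow> dyadic_generic N x"
    by (intro AE_I'[where N="insert 1 (range (\<lambda>z::int. of_int z / 2 ^ N))"]) auto
  then show ?thesis by (subst AE_restrict_space_iff) auto
qed

lemma AE_dyadic_generic: "AE t in unit_cube m. \<forall>k\<in>{1..m}. dyadic_generic N (t k)"
  by (intro AE_finite_allI AE_PiM_component prob_space_unit_interval AE_dyadic_generic_interval) auto

lemma dyadic_index_less: "dyadic_generic N x \<Longrightarrow> dyadic_index N x < 2^N"
proof -
  assume g: "dyadic_generic N x"
  then have "(2::real)^N * x < of_int (2^N)" unfolding dyadic_generic_def by simp
  then have a: "\<lfloor>(2::real)^N * x\<rfloor> < 2^N" by (simp only: floor_less_iff)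
  have b: "0 \<le> \<lfloor>(2::real)^N * x\<rfloor>" using g unfolding dyadic_generic_def by simp
  show ?thesis unfolding dyadic_index_def using a b by (simp add: nat_less_iff)
qed

lemma mem_dyadic_box_iff:
  assumes "t \<in> space (unit_cube m)" "\<forall>k\<in>{1..m}. dyadic_generic N (t k)" "\<kappa> \<in> dyadic_labels N m"
  shows "t \<in> dyadic_box N m \<kappa> \<longleftrightarrow> \<kappa> = restrict (\<lambda>k. dyadic_index N (t k)) {1..m}"
proof -
  have ext: "t \<in> extensional {1..m}" using assms(1) unfolding space_unit_cube by (auto simp: PiE_def)
  have kext: "\<kappa> \<in> extensional {1..m}" using assms(3) unfolding dyadic_labels_def by (auto simp: PiE_def)
  have one: "(real (\<kappa> k) / 2^N \<le> t k \<and> t k < (real (\<kappa> k) + 1) / 2^N) \<longleftrightarrow> \<kappa> k = dyadic_index N (t k)"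
    if k: "k \<in> {1..m}" for k
  proof -
    have t0: "0 \<le> t k" using assms(2) k unfolding dyadic_generic_def by auto
    have "(real (\<kappa> k) / 2^N \<le> t k \<and> t k < (real (\<kappa> k) + 1) / 2^N) \<longleftrightarrow>
          (of_int (int (\<kappa> k)) \<le> 2^N * t k \<and> 2^N * t k < of_int (int (\<kappa> k)) + 1)"
      by (simp add: field_simps)
    also have "\<dots> \<longleftrightarrow> \<lfloor>2^N * t k\<rfloor> = int (\<kappa> k)" by (simp add: floor_eq_iff)
    also have "\<dots> \<longleftrightarrow> \<kappa> k = dyadic_index N (t k)" unfolding dyadic_index_def using t0 by auto
    finally show ?thesis .
  qed
  have "t \<in> dyadic_box N m \<kappa> \<longleftrightarrow> (\<forall>k\<in>{1..m}. real (\<kappa> k) / 2^N \<le> t k \<and> t k < (real (\<kappa> k) + 1) / 2^N)"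
    unfolding dyadic_box_def using ext by (auto simp: PiE_def Pi_def)
  also have "\<dots> \<longleftrightarrow> (\<forall>k\<in>{1..m}. \<kappa> k = dyadic_index N (t k))" using one by auto
  also have "\<dots> \<longleftrightarrow> \<kappa> = restrict (\<lambda>k. dyadic_index N (t k)) {1..m}"
    using kext by (auto simp: restrict_def extensional_def fun_eq_iff)
  finally show ?thesis .
qed

lemma dyadic_index_in_labels: "\<forall>k\<in>{1..m}. dyadic_generic N (t k) \<Longrightarrow> restrict (\<lambda>k. dyadic_index N (t k)) {1..m} \<in> dyadic_labels N m"
  unfolding dyadic_labels_def using dyadic_index_less by auto

lemma dyadic_step_function_eq:
  fixes c :: "(nat \<Rightarrow> nat) \<Rightarrow> real"
  assumes "t \<in> space (unit_cube m)" "\<forall>k\<in>{1..m}. dyadic_generic N (t k)"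
  shows "(\<Sum>\<kappa>\<in>dyadic_labels N m. c \<kappa> * indicator (dyadic_box N m \<kappa>) t) = c (restrict (\<lambda>k. dyadic_index N (t k)) {1..m})"
proof -
  have "(\<Sum>\<kappa>\<in>dyadic_labels N m. c \<kappa> * indicator (dyadic_box N m \<kappa>) t)
      = (\<Sum>\<kappa>\<in>dyadic_labels N m. if \<kappa> = restrict (\<lambda>k. dyadic_index N (t k)) {1..m} then c \<kappa> else 0)"
    using mem_dyadic_box_iff[OF assms] by (intro sum.cong refl) (auto simp: indicator_def)
  also have "\<dots> = c (restrict (\<lambda>k. dyadic_index N (t k)) {1..m})"
    using dyadic_index_in_labels[OF assms(2)] finite_dyadic_labels by (simp add: sum.delta')
  finally show ?thesis .
qed

lemma digit_set_restrict: "digit_set N m (restrict \<kappa> {1..m}) = digit_set N m \<kappa>"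
  unfolding digit_set_def by auto

lemma bij_betw_digit_set: "bij_betw (digit_set N m) (dyadic_labels N m) (Pow ({1..m} \<times> {1..N}))"
proof -
  have inj: "inj_on (digit_set N m) (dyadic_labels N m)"
  proof (rule inj_onI)
    fix \<kappa> \<kappa>' assume k: "\<kappa> \<in> dyadic_labels N m" "\<kappa>' \<in> dyadic_labels N m" and eq: "digit_set N m \<kappa> = digit_set N m \<kappa>'"
    show "\<kappa> = \<kappa>'"
    proof (rule PiE_ext[OF k[unfolded dyadic_labels_def]])
      fix k assume kk: "k \<in> {1..m}"
      show "\<kappa> k = \<kappa>' k"
      proof (rule eq_if_binary_digits_eq[of _ N])
        show "\<kappa> k < 2^N" "\<kappa>' k < 2^N" using k kk by (auto simp: dyadic_labels_def)
        show "\<forall>j<N. odd (\<kappa> k div 2^j) = odd (\<kappa>' k div 2^j)"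
        proof (intro allI impI)
          fix j assume j: "j < N"
          have "(k, N - j) \<in> digit_set N m \<kappa> \<longleftrightarrow> (k, N - j) \<in> digit_set N m \<kappa>'" using eq by simp
          moreover have "N - (N - j) = j" using j by simp
          ultimately show "odd (\<kappa> k div 2^j) = odd (\<kappa>' k div 2^j)" using kk j unfolding digit_set_def by auto
        qed
      qed
    qed
  qed
  have sub: "digit_set N m ` dyadic_labels N m \<subseteq> Pow ({1..m} \<times> {1..N})" unfolding digit_set_def by auto
  have "card (digit_set N m ` dyadic_labels N m) = card (dyadic_labels N m)" by (rule card_image[OF inj])
  also have "\<dots> = (2^N)^m" unfolding dyadic_labels_def by (simp add: card_PiE)
  also have "\<dots> = card (Pow ({1..m} \<times> {1..N}))" by (simp add: card_Pow card_cartesian_product power_mult[symmetric] mult.commute)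
  finally have "digit_set N m ` dyadic_labels N m = Pow ({1..m} \<times> {1..N})"
    by (intro card_subset_eq sub) auto
  then show ?thesis using inj unfolding bij_betw_def by simp
qed

lemma integral_eq_cube_avg_digits:
  fixes F :: "(nat \<Rightarrow> real) \<Rightarrow> real" and G :: "(nat \<times> nat) set \<Rightarrow> real"
  assumes Fm: "F \<in> borel_measurable (unit_cube m)"
    and FG: "\<And>t. t \<in> space (unit_cube m) \<Longrightarrow> (\<forall>k\<in>{1..m}. dyadic_generic N (t k)) \<Longrightarrow> F t = G (digit_set N m (\<lambda>k. dyadic_index N (t k)))"
  shows "integral\<^sup>L (unit_cube m) F = cube_avg ({1..m} \<times> {1..N}) G"
proof -
  define c where "c \<kappa> = G (digit_set N m \<kappa>)" for \<kappa>
  have gm: "(\<lambda>t. \<Sum>\<kappa>\<in>dyadic_labels N m. c \<kappa> * indicator (dyadic_box N m \<kappa>) t) \<in> borel_measurable (unit_cube m)"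
    by (intro borel_measurable_sum borel_measurable_times borel_measurable_const borel_measurable_indicator dyadic_box_sets)
  have ae: "AE t in unit_cube m. F t = (\<Sum>\<kappa>\<in>dyadic_labels N m. c \<kappa> * indicator (dyadic_box N m \<kappa>) t)"
    using AE_dyadic_generic[of m N]
  proof (rule AE_mp[OF _ AE_I2])
    fix t assume t: "t \<in> space (unit_cube m)"
    show "(\<forall>k\<in>{1..m}. dyadic_generic N (t k)) \<longrightarrow> F t = (\<Sum>\<kappa>\<in>dyadic_labels N m. c \<kappa> * indicator (dyadic_box N m \<kappa>) t)"
      using FG[OF t] dyadic_step_function_eq[OF t, of N c] digit_set_restrict[of N m "\<lambda>k. dyadic_index N (t k)"] unfolding c_def by auto
  qed
  have "integral\<^sup>L (unit_cube m) F = integral\<^sup>L (unit_cube m) (\<lambda>t. \<Sum>\<kappa>\<in>dyadic_labels N m. c \<kappa> * indicator (dyadic_box N m \<kappa>) t)"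
    by (rule integral_cong_AE[OF Fm gm ae])
  also have "\<dots> = (\<Sum>\<kappa>\<in>dyadic_labels N m. c \<kappa> * (1 / 2^N)^m)" by (rule integral_dyadic_step_function)
  also have "\<dots> = (\<Sum>A\<in>Pow ({1..m} \<times> {1..N}). G A) * (1 / 2^N)^m"
    unfolding c_def sum_distrib_right[symmetric] using sum.reindex_bij_betw[OF bij_betw_digit_set, of G] by simp
  also have "\<dots> = cube_avg ({1..m} \<times> {1..N}) G"
  proof -
    have e: "((1::real) / 2^N)^m = 1 / 2^(N*m)" by (simp add: power_divide power_mult)
    show ?thesis unfolding cube_avg_def e by (simp add: card_cartesian_product mult.commute)
  qed
  finally show ?thesis .
qed

definition graph_set :: "'k set \<Rightarrow> ('k \<Rightarrow> 'a) \<Rightarrow> ('k \<times> 'a) set" where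
  "graph_set K i = (\<lambda>k. (k, i k)) ` K"

lemma walsh_graph_set: "walsh (graph_set K i) A = (\<Prod>k\<in>K. cube_sign A (k, i k))"
  unfolding walsh_def graph_set_def by (subst prod.reindex) (auto simp: inj_on_def)

lemma graph_set_subset: "i \<in> K \<rightarrow>\<^sub>E B \<Longrightarrow> graph_set K i \<subseteq> K \<times> B"
  unfolding graph_set_def by auto

lemma card_graph_set: "card (graph_set K i) = card K"
  unfolding graph_set_def by (subst card_image) (auto simp: inj_on_def)

lemma inj_on_graph_set: "inj_on (graph_set K) (K \<rightarrow>\<^sub>E B)"
proof (rule inj_onI)
  fix i i' assume i: "i \<in> K \<rightarrow>\<^sub>E B" "i' \<in> K \<rightarrow>\<^sub>E B" and eq: "graph_set K i = graph_set K i'"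
  show "i = i'"
  proof (rule PiE_ext[OF i])
    fix k assume "k \<in> K"
    then have "(k, i k) \<in> graph_set K i'" using eq unfolding graph_set_def by blast
    then show "i k = i' k" unfolding graph_set_def by auto
  qed
qed

lemma measurable_rademacher[measurable]: "rademacher j \<in> borel_measurable borel"
  unfolding rademacher_def by measurable

lemma rademacher_chaos_measurable:
  "(\<lambda>t. \<bar>\<Sum>i\<in>({1..m} \<rightarrow>\<^sub>E {1..N}). (\<Prod>k\<in>{1..m}. rademacher (i k) (t k)) * y i\<bar> powr p)
     \<in> borel_measurable (unit_cube m)"
proof -
  have c: "(\<lambda>t. t k) \<in> borel_measurable (unit_cube m)" if "k \<in> {1..m}" for k
  proof -
    have "(\<lambda>t. t k) \<in> measurable (unit_cube m) (restrict_space lborel {0..1::real})"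
      using that by (rule measurable_component_singleton)
    moreover have "(\<lambda>x. x) \<in> measurable (restrict_space lborel {0..1::real}) borel"
      by (intro measurable_restrict_space1) simp
    ultimately have "(\<lambda>x. x) \<circ> (\<lambda>t. t k) \<in> borel_measurable (unit_cube m)" by (rule measurable_comp)
    then show ?thesis by (simp add: comp_def)
  qed
  have r: "(\<lambda>t. rademacher j (t k)) \<in> borel_measurable (unit_cube m)" if "k \<in> {1..m}" for k j
    using measurable_comp[OF c[OF that] measurable_rademacher] by (simp add: comp_def)
  show ?thesis
    by (intro measurable_abs_powr borel_measurable_sum borel_measurable_times
        borel_measurable_prod borel_measurable_const r measurable_const) auto
qed

lemma integral_rademacher_chaos_eq_cube_avg:
  "integral\<^sup>L (unit_cube m) (\<lambda>t. \<bar>\<Sum>i\<in>({1..m} \<rightarrow>\<^sub>E {1..N}). (\<Prod>k\<in>{1..m}. rademacher (i k) (t k)) * y i\<bar> powr p)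
   = cube_avg ({1..m} \<times> {1..N}) (\<lambda>A. \<bar>\<Sum>i\<in>({1..m} \<rightarrow>\<^sub>E {1..N}). y i * walsh (graph_set {1..m} i) A\<bar> powr p)"
proof (rule integral_eq_cube_avg_digits[OF rademacher_chaos_measurable])
  fix t assume t: "t \<in> space (unit_cube m)" and g: "\<forall>k\<in>{1..m}. dyadic_generic N (t k)"
  have "(\<Prod>k\<in>{1..m}. rademacher (i k) (t k)) = walsh (graph_set {1..m} i) (digit_set N m (\<lambda>k. dyadic_index N (t k)))"
    if i: "i \<in> {1..m} \<rightarrow>\<^sub>E {1..N}" for i
    unfolding walsh_graph_set
  proof (intro prod.cong refl)
    fix k assume k: "k \<in> {1..m}"
    have ik: "i k \<in> {1..N}" using i k by auto
    show "rademacher (i k) (t k) = cube_sign (digit_set N m (\<lambda>k. dyadic_index N (t k))) (k, i k)"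
      using rademacher_eq_parity_dyadic_index[of N "t k" "i k"] g k ik unfolding cube_sign_def digit_set_def by auto
  qed
  then show "\<bar>\<Sum>i\<in>({1..m} \<rightarrow>\<^sub>E {1..N}). (\<Prod>k\<in>{1..m}. rademacher (i k) (t k)) * y i\<bar> powr p =
    \<bar>\<Sum>i\<in>({1..m} \<rightarrow>\<^sub>E {1..N}). y i * walsh (graph_set {1..m} i) (digit_set N m (\<lambda>k. dyadic_index N (t k)))\<bar> powr p"
    by (simp add: mult.commute)
qed

section \<open>The contraction principle\<close>

definition weighted_chaos :: "nat \<Rightarrow> nat \<Rightarrow> ((nat \<Rightarrow> nat) \<Rightarrow> real) \<Rightarrow> (nat \<times> nat \<Rightarrow> real) \<Rightarrow> (nat \<times> nat) set \<Rightarrow> real"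
  where "weighted_chaos m N y z A =
    (\<Sum>i\<in>{1..m} \<rightarrow>\<^sub>E {1..N}. y i * (\<Prod>k\<in>{1..m}. z (k, i k) * cube_sign A (k, i k)))"

lemma weighted_chaos_one:
  "weighted_chaos m N y (\<lambda>_. 1) A = (\<Sum>i\<in>{1..m} \<rightarrow>\<^sub>E {1..N}. y i * walsh (graph_set {1..m} i) A)"
  by (simp add: weighted_chaos_def walsh_graph_set)

lemma weighted_chaos_signs:
  assumes "\<forall>v\<in>{1..m} \<times> {1..N}. z v = 1 \<or> z v = -1"
  shows "weighted_chaos m N y z A = weighted_chaos m N y (\<lambda>_. 1) (sym_diff A {v\<in>{1..m} \<times> {1..N}. z v = -1})"
proof -
  have "z (k, i k) * cube_sign A (k, i k) = cube_sign (sym_diff A {v\<in>{1..m} \<times> {1..N}. z v = -1}) (k, i k)"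
    if "i \<in> {1..m} \<rightarrow>\<^sub>E {1..N}" "k \<in> {1..m}" for i k
    using assms that unfolding cube_sign_symdiff by (force simp: cube_sign_def)
  then show ?thesis unfolding weighted_chaos_def by (auto intro!: sum.cong prod.cong)
qed

lemma weighted_chaos_affine:
  "weighted_chaos m N y z A =
     (1 + z u) / 2 * weighted_chaos m N y (z(u := 1)) A + (1 - z u) / 2 * weighted_chaos m N y (z(u := -1)) A"
proof -
  have "(\<Prod>k\<in>{1..m}. z (k, i k) * cube_sign A (k, i k)) =
      (1 + z u) / 2 * (\<Prod>k\<in>{1..m}. (z(u := 1)) (k, i k) * cube_sign A (k, i k)) +
      (1 - z u) / 2 * (\<Prod>k\<in>{1..m}. (z(u := -1)) (k, i k) * cube_sign A (k, i k))" for i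
  proof (cases "\<exists>k0\<in>{1..m}. (k0, i k0) = u")
    case True
    then obtain k0 where k0: "k0 \<in> {1..m}" "(k0, i k0) = u" by blast
    have "(\<Prod>k\<in>{1..m}. z' (k, i k) * cube_sign A (k, i k))
        = z' u * cube_sign A u * (\<Prod>k\<in>{1..m} - {k0}. z (k, i k) * cube_sign A (k, i k))"
      if "\<And>v. v \<noteq> u \<Longrightarrow> z' v = z v" for z'
    proof -
      have "z' (k, i k) = z (k, i k)" if "k \<in> {1..m} - {k0}" for k
        using that k0 \<open>\<And>v. v \<noteq> u \<Longrightarrow> z' v = z v\<close> by auto
      then show ?thesis using k0 by (subst prod.remove[of _ k0]) (auto intro!: prod.cong)
    qed
    from this[of z] this[of "z(u := 1)"] this[of "z(u := -1)"] show ?thesis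
      by (simp add: field_simps)
  next
    case False
    then have "(\<Prod>k\<in>{1..m}. (z(u := t)) (k, i k) * cube_sign A (k, i k)) =
        (\<Prod>k\<in>{1..m}. z (k, i k) * cube_sign A (k, i k))" for t
      by (intro prod.cong refl) auto
    then show ?thesis by (simp add: field_simps)
  qed
  then show ?thesis
    unfolding weighted_chaos_def by (simp add: sum_distrib_left sum.distrib[symmetric] algebra_simps)
qed

text \<open>The weighted chaos is affine in each weight, so by convexity it suffices to treat weights
  \<open>\<plusminus>1\<close>, and these amount to a reflection of the cube.\<close>

theorem contraction_principle:
  assumes "1 \<le> p" "\<forall>v\<in>{1..m} \<times> {1..N}. \<bar>z v\<bar> \<le> 1"
  shows "cube_avg ({1..m} \<times> {1..N}) (\<lambda>A. \<bar>weighted_chaos m N y z A\<bar> powr p)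
           \<le> cube_avg ({1..m} \<times> {1..N}) (\<lambda>A. \<bar>weighted_chaos m N y (\<lambda>_. 1) A\<bar> powr p)"
proof -
  define V where "V = {1..m} \<times> {1..N}"
  define E1 where "E1 = cube_avg V (\<lambda>A. \<bar>weighted_chaos m N y (\<lambda>_. 1) A\<bar> powr p)"
  have "cube_avg V (\<lambda>A. \<bar>weighted_chaos m N y z A\<bar> powr p) \<le> E1"
    if "finite U" "U \<subseteq> V" "\<forall>v\<in>V. \<bar>z v\<bar> \<le> 1" "\<forall>v\<in>V - U. z v = 1 \<or> z v = -1" for U z
    using that
  proof (induction U arbitrary: z rule: finite_induct)
    case empty
    then have signs: "\<forall>v\<in>{1..m} \<times> {1..N}. z v = 1 \<or> z v = -1" unfolding V_def by simp
    show ?case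
      unfolding E1_def V_def weighted_chaos_signs[OF signs]
      by (intro cube_avg_symdiff[THEN eq_refl]) auto
  next
    case (insert u U)
    define l where "l = (1 + z u) / 2"
    have l: "0 \<le> l" "l \<le> 1" "1 - l = (1 - z u) / 2"
      using insert.prems unfolding l_def by (auto simp: abs_le_iff field_simps)
    have IH: "cube_avg V (\<lambda>A. \<bar>weighted_chaos m N y (z(u := t)) A\<bar> powr p) \<le> E1" if "t = 1 \<or> t = -1" for t
      by (rule insert.IH) (use insert.prems that in auto)
    have "\<bar>weighted_chaos m N y z A\<bar> powr p \<le>
        l * \<bar>weighted_chaos m N y (z(u := 1)) A\<bar> powr p + (1 - l) * \<bar>weighted_chaos m N y (z(u := -1)) A\<bar> powr p" for A
    proof -
      have "weighted_chaos m N y z A = l * weighted_chaos m N y (z(u := 1)) A + (1 - l) * weighted_chaos m N y (z(u := -1)) A"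
        unfolding l(3) unfolding l_def by (rule weighted_chaos_affine)
      then show ?thesis by (simp only:) (rule abs_powr_convex[OF assms(1) l(1,2)])
    qed
    then have "cube_avg V (\<lambda>A. \<bar>weighted_chaos m N y z A\<bar> powr p) \<le>
        l * cube_avg V (\<lambda>A. \<bar>weighted_chaos m N y (z(u := 1)) A\<bar> powr p) +
        (1 - l) * cube_avg V (\<lambda>A. \<bar>weighted_chaos m N y (z(u := -1)) A\<bar> powr p)"
      by (subst (1 2) cube_avg_cmult[symmetric], subst cube_avg_add[symmetric]) (rule cube_avg_mono)
    also have "\<dots> \<le> l * E1 + (1 - l) * E1"
      using IH[of 1] IH[of "-1"] l by (intro add_mono mult_left_mono) auto
    finally show ?case by (simp add: algebra_simps)
  qed
  from this[of V z] show ?thesis using assms(2) unfolding V_def E1_def by simp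
qed

definition array_form :: "nat \<Rightarrow> nat \<Rightarrow> nat \<Rightarrow> (nat \<Rightarrow> (nat \<Rightarrow> nat) \<Rightarrow> real) \<Rightarrow> (nat \<Rightarrow> nat \<Rightarrow> real) \<Rightarrow> real"
  where "array_form m K N c x =
    (\<Sum>(j, i)\<in>{..<K} \<times> ({1..m} \<rightarrow>\<^sub>E {1..N}). c j i * (x 0 j * (\<Prod>k\<in>{1..m}. x k (i k))))"

lemma prod_lessThan_Suc_eq_first_times: "(\<Prod>k<Suc m. f k) = f 0 * (\<Prod>k\<in>{1..m}. f k)"
proof -
  have "{..<Suc m} = insert 0 {1..m}" by auto
  then show ?thesis by simp
qed

lemma multilinear_form_array_form: "multilinear_form (Suc m) q (array_form m K N c)"
proof (rule multilinear_form_polynomial)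
  show "array_form m K N c x = (\<Sum>\<tau>\<in>{..<K} \<times> ({1..m} \<rightarrow>\<^sub>E {1..N}).
      c (fst \<tau>) (snd \<tau>) * (\<Prod>k<Suc m. x k (if k = 0 then fst \<tau> else snd \<tau> k)))" for x
    unfolding array_form_def prod_lessThan_Suc_eq_first_times
    by (intro sum.cong refl) (auto intro!: prod.cong)
qed

lemma coeff_array_form:
  assumes "i' \<in> extensional {1..m}"
  shows "coeff (Suc m) (array_form m K N c) j' i' = (if j' < K \<and> i' \<in> {1..m} \<rightarrow>\<^sub>E {1..N} then c j' i' else 0)"
proof -
  have ind: "unit_vec j' j * (\<Prod>k\<in>{1..m}. unit_vec (i' k) (i k)) = (if (j, i) = (j', i') then 1 else 0)"
    if "i \<in> {1..m} \<rightarrow>\<^sub>E {1..N}" for j i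
  proof -
    have eq: "i = i' \<longleftrightarrow> (\<forall>k\<in>{1..m}. i k = i' k)"
      using assms that by (auto intro: extensionalityI simp: PiE_iff)
    have "(\<Prod>k\<in>{1..m}. unit_vec (i' k) (i k)) = (if \<forall>k\<in>{1..m}. i k = i' k then 1 else 0)"
      by (auto simp: prod_zero_iff unit_vec_def)
    then show ?thesis unfolding eq[symmetric] by (simp add: unit_vec_def)
  qed
  have "coeff (Suc m) (array_form m K N c) j' i' =
      (\<Sum>(j, i)\<in>{..<K} \<times> ({1..m} \<rightarrow>\<^sub>E {1..N}). c j i * (unit_vec j' j * (\<Prod>k\<in>{1..m}. unit_vec (i' k) (i k))))"
    unfolding coeff_def array_form_def by (intro sum.cong refl) (auto intro!: prod.cong)
  also have "\<dots> = (\<Sum>\<tau>\<in>{..<K} \<times> ({1..m} \<rightarrow>\<^sub>E {1..N}). if \<tau> = (j', i') then c j' i' else 0)"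
  proof (rule sum.cong[OF refl], clarify)
    fix j i assume "i \<in> {1..m} \<rightarrow>\<^sub>E {1..N}"
    from ind[OF this, of j] show "c j i * (unit_vec j' j * (\<Prod>k\<in>{1..m}. unit_vec (i' k) (i k))) =
        (if (j, i) = (j', i') then c j' i' else 0)" by simp
  qed
  also have "\<dots> = (if j' < K \<and> i' \<in> {1..m} \<rightarrow>\<^sub>E {1..N} then c j' i' else 0)"
    by (simp add: sum.delta finite_PiE)
  finally show ?thesis .
qed

lemma mixed_sum_array_form:
  assumes "K \<le> N'" "N < N'"
  shows "mixed_sum (Suc m) q (array_form m K N c) N' =
    (\<Sum>i\<in>{1..m} \<rightarrow>\<^sub>E {1..N}. (\<Sum>j<K. \<bar>c j i\<bar> powr conj_exp q) powr (2 / conj_exp q)) powr (1 / 2)"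
proof -
  define r where "r = conj_exp q"
  have sub: "{1..m} \<rightarrow>\<^sub>E {1..N} \<subseteq> {1..m} \<rightarrow>\<^sub>E {..<N'}" using assms by (auto simp: PiE_def Pi_def)
  have "(\<Sum>j<N'. \<bar>coeff (Suc m) (array_form m K N c) j i\<bar> powr r) powr (2 / r) =
      (if i \<in> {1..m} \<rightarrow>\<^sub>E {1..N} then (\<Sum>j<K. \<bar>c j i\<bar> powr r) powr (2 / r) else 0)"
    if "i \<in> {1..m} \<rightarrow>\<^sub>E {..<N'}" for i
  proof -
    have "(\<Sum>j<N'. \<bar>coeff (Suc m) (array_form m K N c) j i\<bar> powr r) =
        (\<Sum>j<N'. if j < K \<and> i \<in> {1..m} \<rightarrow>\<^sub>E {1..N} then \<bar>c j i\<bar> powr r else 0)"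
      using that by (intro sum.cong refl) (simp add: coeff_array_form PiE_iff)
    also have "\<dots> = (if i \<in> {1..m} \<rightarrow>\<^sub>E {1..N} then (\<Sum>j<K. \<bar>c j i\<bar> powr r) else 0)"
      using assms(1) by (simp add: sum.If_cases Int_absorb1 lessThan_subset_iff flip: lessThan_def)
    finally show ?thesis by simp
  qed
  then have "mixed_sum (Suc m) q (array_form m K N c) N' =
      (\<Sum>i\<in>{1..m} \<rightarrow>\<^sub>E {..<N'}. if i \<in> {1..m} \<rightarrow>\<^sub>E {1..N} then (\<Sum>j<K. \<bar>c j i\<bar> powr r) powr (2 / r) else 0)
        powr (1 / 2)"
    unfolding mixed_sum_def r_def by (simp add: atLeastLessThanSuc_atLeastAtMost cong: sum.cong)
  also have "\<dots> = (\<Sum>i\<in>{1..m} \<rightarrow>\<^sub>E {1..N}. (\<Sum>j<K. \<bar>c j i\<bar> powr r) powr (2 / r)) powr (1 / 2)"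
    using sub by (simp add: sum.If_cases Int_absorb1 finite_PiE)
  finally show ?thesis unfolding r_def .
qed

section \<open>The lower bound for the constant\<close>

definition D_admissible :: "nat \<Rightarrow> ereal \<Rightarrow> real \<Rightarrow> bool" where
  "D_admissible M q D \<longleftrightarrow> 0 \<le> D \<and>
     (\<forall>T. cont_multilinear_form M q T \<longrightarrow> (\<forall>N. mixed_sum M q T N \<le> D * form_norm M q T))"

lemma D_const_eq_Inf: "D_const M q = Inf (Collect (D_admissible M q))"
  unfolding D_const_def D_admissible_def ..

lemma conj_ereal_1: "conj_ereal 1 = \<infinity>"
  unfolding conj_ereal_def by simp

lemma conj_ereal_gt_1: "1 < p \<Longrightarrow> conj_ereal p = ereal (p / (p - 1))"
  unfolding conj_ereal_def by simp

lemma unit_tuples_first_slot_duality: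
  assumes "1 \<le> p" "x \<in> unit_tuples M (conj_ereal p)" "0 < M" "\<forall>j<K. 0 \<le> a j"
  shows "(\<Sum>j<K. \<bar>x 0 j\<bar> * a j) \<le> (\<Sum>j<K. a j powr p) powr (1 / p)"
proof (cases "p = 1")
  case True
  then have "\<bar>x 0 j\<bar> \<le> 1" for j
    using unit_tuples_abs_le_1_first[of x M j] assms(2,3) by (simp add: conj_ereal_1)
  then have "(\<Sum>j<K. \<bar>x 0 j\<bar> * a j) \<le> (\<Sum>j<K. a j)"
    using assms(4) by (intro sum_mono) (simp add: mult_left_le_one_le)
  then show ?thesis using True assms(4) by simp
next
  case False
  then have p1: "1 < p" using assms(1) by simp
  define r where "r = p / (p - 1)"
  have r: "1 < r" "1 / r + 1 / p = 1" using p1 by (auto simp: r_def field_simps)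
  have x0: "x 0 \<in> lq_space r" "lq_norm r (x 0) \<le> 1"
    using unit_tuples_lq_norm_first[of x M r] assms(2,3) conj_ereal_gt_1[OF p1] by (auto simp: r_def)
  have "(\<Sum>j<K. \<bar>x 0 j\<bar> * a j) \<le> (\<Sum>j<K. \<bar>x 0 j\<bar> powr r) powr (1 / r) * (\<Sum>j<K. a j powr p) powr (1 / p)"
    by (rule holder_inequality_sum) (use r p1 assms(4) in auto)
  also have "\<dots> \<le> 1 * (\<Sum>j<K. a j powr p) powr (1 / p)"
    using lq_partial_sum_le_lq_norm[OF x0(1), of K] x0(2) r by (intro mult_right_mono) auto
  finally show ?thesis by simp
qed

lemma bij_betw_lessThan_Pow_card:
  assumes "bij_betw e {..<K} (Pow V)" "finite V"
  shows "real K = 2 ^ card V"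
  using bij_betw_same_card[OF assms(1)] assms(2) by (simp add: card_Pow)

lemma sum_bij_betw_Pow_eq_cube_avg:
  assumes "bij_betw e {..<K} (Pow V)" "finite V"
  shows "(\<Sum>j<K. (1 / real K) * g (e j)) = cube_avg V g"
  using sum.reindex_bij_betw[OF assms(1), of g] bij_betw_lessThan_Pow_card[OF assms]
  unfolding cube_avg_def by (simp add: sum_divide_distrib[symmetric])

text \<open>The test form of the lower bound: its first variable is indexed by the points \<open>e j\<close> of the
  cube, with weights chosen so that pairing against the unit ball of \<open>\<ell>_p*\<close> reproduces the
  \<open>L^p\<close> norm of the chaos.\<close>

definition chaos_test_form ::
    "real \<Rightarrow> nat \<Rightarrow> nat \<Rightarrow> ((nat \<Rightarrow> nat) \<Rightarrow> real) \<Rightarrow> (nat \<Rightarrow> (nat \<times> nat) set) \<Rightarrow> nat \<Rightarrow> (nat \<Rightarrow> nat \<Rightarrow> real) \<Rightarrow> real"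
  where "chaos_test_form p m N y e K =
    array_form m K N (\<lambda>j i. (1 / real K) powr (1 / p) * y i * walsh (graph_set {1..m} i) (e j))"

lemma chaos_test_form_eq:
  "chaos_test_form p m N y e K x =
     (\<Sum>j<K. x 0 j * ((1 / real K) powr (1 / p) * weighted_chaos m N y (\<lambda>v. x (fst v) (snd v)) (e j)))"
proof -
  have "weighted_chaos m N y (\<lambda>v. x (fst v) (snd v)) A =
      (\<Sum>i\<in>{1..m} \<rightarrow>\<^sub>E {1..N}. y i * ((\<Prod>k\<in>{1..m}. x k (i k)) * walsh (graph_set {1..m} i) A))" for A
    unfolding weighted_chaos_def walsh_graph_set by (simp add: prod.distrib)
  then show ?thesis
    unfolding chaos_test_form_def array_form_def sum.cartesian_product[symmetric]
    by (simp add: sum_distrib_left algebra_simps)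
qed

lemma abs_chaos_test_form_le:
  assumes "1 \<le> p" "bij_betw e {..<K} (Pow ({1..m} \<times> {1..N}))"
    and "x \<in> unit_tuples (Suc m) (conj_ereal p)"
  shows "\<bar>chaos_test_form p m N y e K x\<bar>
           \<le> (cube_avg ({1..m} \<times> {1..N}) (\<lambda>A. \<bar>weighted_chaos m N y (\<lambda>_. 1) A\<bar> powr p)) powr (1 / p)"
proof -
  define z where "z v = x (fst v) (snd v)" for v
  define w where "w = 1 / real K"
  have w: "0 < w" using bij_betw_lessThan_Pow_card[OF assms(2)] by (simp add: w_def)
  have "\<bar>chaos_test_form p m N y e K x\<bar> \<le> (\<Sum>j<K. \<bar>x 0 j\<bar> * (w powr (1 / p) * \<bar>weighted_chaos m N y z (e j)\<bar>))"
    unfolding chaos_test_form_eq z_def[symmetric] w_def[symmetric]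
    by (rule order.trans[OF sum_abs]) (simp add: abs_mult)
  also have "\<dots> \<le> (\<Sum>j<K. (w powr (1 / p) * \<bar>weighted_chaos m N y z (e j)\<bar>) powr p) powr (1 / p)"
    by (rule unit_tuples_first_slot_duality[OF assms(1,3)]) simp_all
  also have "(\<Sum>j<K. (w powr (1 / p) * \<bar>weighted_chaos m N y z (e j)\<bar>) powr p) =
      (\<Sum>j<K. w * \<bar>weighted_chaos m N y z (e j)\<bar> powr p)"
    using w assms(1) by (simp add: powr_mult powr_powr)
  also have "\<dots> = cube_avg ({1..m} \<times> {1..N}) (\<lambda>A. \<bar>weighted_chaos m N y z A\<bar> powr p)"
    unfolding w_def by (rule sum_bij_betw_Pow_eq_cube_avg[OF assms(2)]) simp
  also have "\<dots> powr (1 / p) \<le>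
      (cube_avg ({1..m} \<times> {1..N}) (\<lambda>A. \<bar>weighted_chaos m N y (\<lambda>_. 1) A\<bar> powr p)) powr (1 / p)"
    using assms(1,3) unit_tuples_abs_le_1[OF assms(3)]
    by (intro powr_mono2 contraction_principle) (auto intro: cube_avg_nonneg simp: z_def)
  finally show ?thesis .
qed

lemma mixed_sum_chaos_test_form:
  assumes "1 \<le> p" "bij_betw e {..<K} (Pow ({1..m} \<times> {1..N}))" "K \<le> N'" "N < N'"
  shows "mixed_sum (Suc m) (conj_ereal p) (chaos_test_form p m N y e K) N' = sqrt (\<Sum>i\<in>{1..m} \<rightarrow>\<^sub>E {1..N}. (y i)\<^sup>2)"
proof -
  have K: "0 < real K" using bij_betw_lessThan_Pow_card[OF assms(2)] by simp
  have "(\<Sum>j<K. \<bar>(1 / real K) powr (1 / p) * y i * walsh (graph_set {1..m} i) (e j)\<bar> powr p) = \<bar>y i\<bar> powr p"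
    for i using K assms(1) by (simp add: abs_mult powr_mult powr_powr)
  moreover have "(\<bar>t\<bar> powr p) powr (2 / p) = t\<^sup>2" for t :: real
    using assms(1) by (cases "t = 0") (simp_all add: powr_powr powr_numeral)
  ultimately show ?thesis
    unfolding chaos_test_form_def mixed_sum_array_form[OF assms(3,4)] conj_exp_conj_ereal[OF assms(1)]
    by (simp add: powr_half_sqrt sum_nonneg)
qed

lemma l2_le_admissible_mult_chaos_norm:
  fixes y :: "(nat \<Rightarrow> nat) \<Rightarrow> real"
  assumes "1 \<le> p" "D_admissible (Suc m) (conj_ereal p) D"
  shows "sqrt (\<Sum>i\<in>{1..m} \<rightarrow>\<^sub>E {1..N}. (y i)\<^sup>2) \<le>
     D * (cube_avg ({1..m} \<times> {1..N}) (\<lambda>A. \<bar>\<Sum>i\<in>{1..m} \<rightarrow>\<^sub>E {1..N}. y i * walsh (graph_set {1..m} i) A\<bar> powr p)) powr (1 / p)"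
proof -
  have "finite (Pow ({1..m} \<times> {1..N}))" by simp
  from ex_bij_betw_nat_finite[OF this] obtain e
    where e: "bij_betw e {..<card (Pow ({1..m} \<times> {1..N}))} (Pow ({1..m} \<times> {1..N}))"
    by (auto simp: atLeast0LessThan)
  define K where "K = card (Pow ({1..m} \<times> {1..N}))"
  define J where "J = (cube_avg ({1..m} \<times> {1..N}) (\<lambda>A. \<bar>weighted_chaos m N y (\<lambda>_. 1) A\<bar> powr p)) powr (1 / p)"
  define T where "T = chaos_test_form p m N y e K"
  have bound: "\<bar>T x\<bar> \<le> J" if "x \<in> unit_tuples (Suc m) (conj_ereal p)" for x
    unfolding T_def J_def using abs_chaos_test_form_le[OF assms(1) e[folded K_def] that] .
  have "cont_multilinear_form (Suc m) (conj_ereal p) T"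
    unfolding cont_multilinear_form_def T_def chaos_test_form_def
    using multilinear_form_array_form bound[unfolded T_def chaos_test_form_def] by (auto intro!: bdd_aboveI2)
  then have "mixed_sum (Suc m) (conj_ereal p) T (K + N + 1) \<le> D * form_norm (Suc m) (conj_ereal p) T"
    using assms(2) unfolding D_admissible_def by blast
  also have "\<dots> \<le> D * J"
    using assms(2) form_norm_le[OF bound] by (intro mult_left_mono) (auto simp: D_admissible_def)
  moreover have "mixed_sum (Suc m) (conj_ereal p) T (K + N + 1) = sqrt (\<Sum>i\<in>{1..m} \<rightarrow>\<^sub>E {1..N}. (y i)\<^sup>2)"
    unfolding T_def by (rule mixed_sum_chaos_test_form[OF assms(1) e[folded K_def]]) auto
  ultimately show ?thesis unfolding J_def weighted_chaos_one by simp
qed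

section \<open>The upper bound \<open>3\<^sup>m\<close> for the constant\<close>

definition sign_tuple :: "nat \<Rightarrow> nat \<Rightarrow> (nat \<times> nat) set \<Rightarrow> (nat \<Rightarrow> real) \<Rightarrow> nat \<Rightarrow> nat \<Rightarrow> real" where
  "sign_tuple M N A u =
     (\<lambda>k. if k = 0 then u else if k < M then (\<lambda>n. if n < N then cube_sign A (k, n) else 0) else (\<lambda>_. 0))"

lemma sign_tuple_in_tuples:
  assumes "0 < M" "support_below N' u"
  shows "sign_tuple M N A u \<in> tuples M q"
proof -
  have sv: "support_below N (\<lambda>n. if n < N then cube_sign A (k, n) else 0)" for k
    by (simp add: support_below_def)
  show ?thesis
    using assms support_below_slot_space[OF assms(2)] unfolding tuples_def sign_tuple_def
    by (auto intro: support_below_slot_space[OF sv])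
qed

lemma sign_tuple_in_unit_tuples:
  assumes "0 < M" "support_below N' u" "slot_norm q 0 u \<le> 1"
  shows "sign_tuple M N A u \<in> unit_tuples M q"
proof -
  have "c0_norm (\<lambda>n. if n < N then cube_sign A (k, n) else 0) \<le> 1" for k
    by (rule c0_norm_le) simp
  then show ?thesis
    using assms sign_tuple_in_tuples[OF assms(1,2)] unfolding unit_tuples_def
    by (auto simp: slot_norm_def sign_tuple_def)
qed

lemma form_sign_tuple_unit_vec:
  assumes "multilinear_form (Suc m) q T"
  shows "T (sign_tuple (Suc m) N A (unit_vec j)) =
           (\<Sum>i\<in>{1..m} \<rightarrow>\<^sub>E {..<N}. coeff (Suc m) T j i * walsh (graph_set {1..m} i) A)"
proof -
  have "sign_tuple (Suc m) N A (unit_vec j) \<in> tuples (Suc m) q"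
    by (rule sign_tuple_in_tuples[OF _ support_below_unit_vec[of j "Suc j"]]) simp_all
  moreover have "\<forall>k\<in>{1..<Suc m}. support_below N (sign_tuple (Suc m) N A (unit_vec j) k)"
    by (auto simp: sign_tuple_def support_below_def)
  ultimately have "T (sign_tuple (Suc m) N A (unit_vec j)) = (\<Sum>i\<in>{1..<Suc m} \<rightarrow>\<^sub>E {..<N}.
      (\<Prod>k\<in>{1..<Suc m}. sign_tuple (Suc m) N A (unit_vec j) k (i k)) * coeff (Suc m) T j i)"
    by (intro multilinear_form_coeff_expansion[OF assms]) (auto simp: sign_tuple_def)
  also have "\<dots> = (\<Sum>i\<in>{1..m} \<rightarrow>\<^sub>E {..<N}. coeff (Suc m) T j i * walsh (graph_set {1..m} i) A)"
    unfolding atLeastLessThanSuc_atLeastAtMost walsh_graph_set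
    by (intro sum.cong refl) (auto simp: sign_tuple_def mult.commute intro!: prod.cong)
  finally show ?thesis .
qed

lemma form_sign_tuple_sum:
  assumes "multilinear_form (Suc m) q T"
  shows "T (sign_tuple (Suc m) N A (\<lambda>n. \<Sum>j<N. b j * unit_vec j n)) =
           (\<Sum>j<N. b j * T (sign_tuple (Suc m) N A (unit_vec j)))"
proof -
  have x0: "sign_tuple (Suc m) N A (\<lambda>_. 0) \<in> tuples (Suc m) q"
    by (rule sign_tuple_in_tuples[of _ 0]) (simp_all add: support_below_def)
  have upd: "(sign_tuple (Suc m) N A (\<lambda>_. 0))(0 := u) = sign_tuple (Suc m) N A u" for u
    unfolding sign_tuple_def by auto
  have "T ((sign_tuple (Suc m) N A (\<lambda>_. 0))(0 := (\<lambda>n. \<Sum>j<N. b j * unit_vec j n))) =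
      (\<Sum>j<N. b j * T ((sign_tuple (Suc m) N A (\<lambda>_. 0))(0 := unit_vec j)))"
    by (rule multilinear_form_sum_slot[OF assms x0]) (auto intro: support_below_unit_vec)
  then show ?thesis unfolding upd .
qed

text \<open>The vector attaining equality in Hoelder's inequality for \<open>L\<close>.\<close>

lemma lp_norming_vector:
  fixes L :: "nat \<Rightarrow> real"
  assumes "1 < p" "0 < S" "S = (\<Sum>j<N. \<bar>L j\<bar> powr p)"
  defines "b \<equiv> \<lambda>j. sgn (L j) * \<bar>L j\<bar> powr (p - 1) / S powr ((p - 1) / p)"
  shows "(\<Sum>j<N. \<bar>b j\<bar> powr (p / (p - 1))) = 1" "(\<Sum>j<N. b j * L j) = S powr (1 / p)"
proof -
  define r where "r = p / (p - 1)"
  have r: "(p - 1) * r = p" "(p - 1) / p * r = 1" using assms(1) by (simp_all add: r_def)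
  have "\<bar>b j\<bar> powr r = \<bar>L j\<bar> powr p / S" for j
  proof (cases "L j = 0")
    case True
    then show ?thesis using assms(1) by (simp add: b_def r_def)
  next
    case False
    then have "\<bar>b j\<bar> powr r = (\<bar>L j\<bar> powr (p - 1)) powr r / (S powr ((p - 1) / p)) powr r"
      using assms(2) by (simp add: b_def abs_mult abs_sgn_eq powr_divide)
    also have "\<dots> = \<bar>L j\<bar> powr p / S powr 1" by (simp only: powr_powr r)
    finally show ?thesis using assms(2) by simp
  qed
  then show "(\<Sum>j<N. \<bar>b j\<bar> powr (p / (p - 1))) = 1"
    using assms(2,3) unfolding r_def by (simp add: sum_divide_distrib[symmetric])
  have "b j * L j = \<bar>L j\<bar> powr p / S powr ((p - 1) / p)" for j
  proof -
    have "sgn (L j) * L j = \<bar>L j\<bar>" by (simp add: sgn_if)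
    then have "b j * L j = \<bar>L j\<bar> * \<bar>L j\<bar> powr (p - 1) / S powr ((p - 1) / p)"
      unfolding b_def by (simp add: mult_ac)
    then show ?thesis using powr_eq_mult_powr_diff[of "\<bar>L j\<bar>" p] by simp
  qed
  then have "(\<Sum>j<N. b j * L j) = S / S powr ((p - 1) / p)"
    using assms(3) by (simp add: sum_divide_distrib)
  also have "\<dots> = S powr (1 / p)"
  proof -
    have "S powr (1 / p) * S powr ((p - 1) / p) = S"
      using assms(1,2) by (simp add: powr_add[symmetric] add_divide_distrib[symmetric])
    then show ?thesis using assms(2) by (simp add: field_simps)
  qed
  finally show "(\<Sum>j<N. b j * L j) = S powr (1 / p)" .
qed

lemma lp_norm_le_of_pairings:
  assumes "1 \<le> p" "0 \<le> B"
    and pairing: "\<And>b. X_norm (conj_ereal p) (\<lambda>n. if n < N then b n else 0) \<le> 1 \<Longrightarrow> \<bar>\<Sum>j<N. b j * L j\<bar> \<le> B"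
  shows "(\<Sum>j<N. \<bar>L j\<bar> powr p) powr (1 / p) \<le> B"
proof (cases "p = 1")
  case True
  have "X_norm (conj_ereal p) (\<lambda>n. if n < N then sgn (L n) else 0) \<le> 1"
    unfolding True conj_ereal_1 X_norm_def by (simp, rule c0_norm_le) (auto simp: abs_sgn_eq)
  then have "\<bar>\<Sum>j<N. sgn (L j) * L j\<bar> \<le> B" by (rule pairing)
  moreover have "sgn (L j) * L j = \<bar>L j\<bar>" for j by (simp add: sgn_if)
  ultimately show ?thesis using True by (simp add: sum_nonneg)
next
  case False
  then have p1: "1 < p" using assms(1) by simp
  define S where "S = (\<Sum>j<N. \<bar>L j\<bar> powr p)"
  show ?thesis
  proof (cases "S = 0")
    case True then show ?thesis unfolding S_def[symmetric] using assms(2) by simp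
  next
    case False
    then have S: "0 < S" using S_def by (simp add: order_less_le sum_nonneg)
    define b where "b j = sgn (L j) * \<bar>L j\<bar> powr (p - 1) / S powr ((p - 1) / p)" for j
    note norming = lp_norming_vector[OF p1 S S_def, folded b_def]
    have "X_norm (conj_ereal p) (\<lambda>n. if n < N then b n else 0) = (\<Sum>n<N. \<bar>b n\<bar> powr (p / (p - 1))) powr (1 / (p / (p - 1)))"
      using lq_norm_support_below[of N "\<lambda>n. if n < N then b n else 0"] conj_ereal_gt_1[OF p1]
      unfolding X_norm_def by (simp add: support_below_def)
    then have "\<bar>\<Sum>j<N. b j * L j\<bar> \<le> B" by (intro pairing) (simp add: norming(1))
    then show ?thesis using S unfolding norming(2) S_def by simp
  qed
qed

lemma lp_norm_form_sign_tuples_le_form_norm: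
  assumes "1 \<le> p" "cont_multilinear_form (Suc m) (conj_ereal p) T"
  shows "(\<Sum>j<N. \<bar>T (sign_tuple (Suc m) N A (unit_vec j))\<bar> powr p) powr (1 / p) \<le> form_norm (Suc m) (conj_ereal p) T"
proof (rule lp_norm_le_of_pairings[OF assms(1) form_norm_nonneg[OF assms(2)]])
  fix b :: "nat \<Rightarrow> real"
  assume "X_norm (conj_ereal p) (\<lambda>n. if n < N then b n else 0) \<le> 1"
  then have "sign_tuple (Suc m) N A (\<lambda>n. \<Sum>j<N. b j * unit_vec j n) \<in> unit_tuples (Suc m) (conj_ereal p)"
    by (intro sign_tuple_in_unit_tuples[of _ N]) (simp_all add: sum_unit_vec support_below_def slot_norm_def)
  then have bound: "\<bar>T (sign_tuple (Suc m) N A (\<lambda>n. \<Sum>j<N. b j * unit_vec j n))\<bar> \<le> form_norm (Suc m) (conj_ereal p) T"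
    by (rule abs_le_form_norm[OF assms(2)])
  have ml: "multilinear_form (Suc m) (conj_ereal p) T"
    using assms(2) unfolding cont_multilinear_form_def by simp
  from bound show "\<bar>\<Sum>j<N. b j * T (sign_tuple (Suc m) N A (unit_vec j))\<bar> \<le> form_norm (Suc m) (conj_ereal p) T"
    unfolding form_sign_tuple_sum[OF ml] .
qed


lemma graph_chaos_khintchine:
  fixes c :: "(nat \<Rightarrow> nat) \<Rightarrow> real" and N :: nat
  assumes "1 \<le> p"
  shows "(\<Sum>i\<in>{1..m} \<rightarrow>\<^sub>E {..<N}. (c i)\<^sup>2) powr (p / 2) \<le>
    (3 ^ m) powr p * cube_avg ({1..m} \<times> {..<N}) (\<lambda>A. \<bar>\<Sum>i\<in>{1..m} \<rightarrow>\<^sub>E {..<N}. c i * walsh (graph_set {1..m} i) A\<bar> powr p)"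
proof -
  define s where "s = sqrt (\<Sum>i\<in>{1..m} \<rightarrow>\<^sub>E {..<N}. (c i)\<^sup>2)"
  define E where "E = cube_avg ({1..m} \<times> {..<N}) (\<lambda>A. \<bar>\<Sum>i\<in>{1..m} \<rightarrow>\<^sub>E {..<N}. c i * walsh (graph_set {1..m} i) A\<bar> powr p)"
  have E: "0 \<le> E" unfolding E_def by (rule cube_avg_nonneg) simp
  have "s \<le> 3 ^ m * E powr (1 / p)"
    unfolding s_def E_def using assms graph_set_subset[of _ "{1..m}" "{..<N}"] inj_on_graph_set
    by (intro walsh_chaos_khintchine_powr) (auto simp: card_graph_set intro: finite_PiE)
  then have "s powr p \<le> (3 ^ m * E powr (1 / p)) powr p"
    using assms by (intro powr_mono2) (auto simp: s_def sum_nonneg)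
  also have "\<dots> = (3 ^ m) powr p * E" using E assms by (simp add: powr_mult powr_powr)
  also have "s powr p = (\<Sum>i\<in>{1..m} \<rightarrow>\<^sub>E {..<N}. (c i)\<^sup>2) powr (p / 2)"
    unfolding s_def by (simp add: powr_half_sqrt[symmetric] powr_powr sum_nonneg)
  finally show ?thesis unfolding E_def .
qed

lemma sum_rows_chaos_le_form_norm:
  assumes "1 \<le> p" "cont_multilinear_form (Suc m) (conj_ereal p) T"
  shows "(\<Sum>j<N. cube_avg ({1..m} \<times> {..<N})
           (\<lambda>A. \<bar>\<Sum>i\<in>{1..m} \<rightarrow>\<^sub>E {..<N}. coeff (Suc m) T j i * walsh (graph_set {1..m} i) A\<bar> powr p))
         \<le> form_norm (Suc m) (conj_ereal p) T powr p"
proof -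
  have ml: "multilinear_form (Suc m) (conj_ereal p) T"
    using assms(2) unfolding cont_multilinear_form_def by simp
  have "(\<Sum>j<N. \<bar>\<Sum>i\<in>{1..m} \<rightarrow>\<^sub>E {..<N}. coeff (Suc m) T j i * walsh (graph_set {1..m} i) A\<bar> powr p)
      \<le> form_norm (Suc m) (conj_ereal p) T powr p" for A
  proof -
    define X where "X = (\<Sum>j<N. \<bar>T (sign_tuple (Suc m) N A (unit_vec j))\<bar> powr p)"
    have "X = (X powr (1 / p)) powr p" using assms(1) by (simp add: powr_powr X_def sum_nonneg)
    also have "\<dots> \<le> form_norm (Suc m) (conj_ereal p) T powr p"
      using lp_norm_form_sign_tuples_le_form_norm[OF assms, of N A] assms(1)
      by (intro powr_mono2) (auto simp: X_def)
    finally show ?thesis unfolding X_def form_sign_tuple_unit_vec[OF ml] .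
  qed
  then show ?thesis
    by (subst cube_avg_sum[symmetric]) (rule order.trans[OF cube_avg_mono cube_avg_const[THEN eq_refl]], auto)
qed

lemma mixed_sum_eq_coeff:
  assumes "1 \<le> p"
  shows "mixed_sum (Suc m) (conj_ereal p) T N =
    (\<Sum>i\<in>{1..m} \<rightarrow>\<^sub>E {..<N}. (\<Sum>j<N. \<bar>coeff (Suc m) T j i\<bar> powr p) powr (2 / p)) powr (1 / 2)"
  unfolding mixed_sum_def conj_exp_conj_ereal[OF assms] atLeastLessThanSuc_atLeastAtMost ..

text \<open>Khintchine's inequality for each row of coefficients, then Minkowski's inequality in
  \<open>\<ell>_(2/p)\<close> to exchange the two sums.\<close>

theorem three_pow_admissible:
  assumes "1 \<le> p" "p \<le> 2"
  shows "D_admissible (Suc m) (conj_ereal p) (3 ^ m)"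
  unfolding D_admissible_def
proof (intro conjI allI impI)
  fix T and N :: nat
  assume cont: "cont_multilinear_form (Suc m) (conj_ereal p) T"
  define F where "F = form_norm (Suc m) (conj_ereal p) T"
  define c where "c j i = coeff (Suc m) T j i" for j i
  define I where "I = {1..m} \<rightarrow>\<^sub>E {..<N}"
  define E where "E j = cube_avg ({1..m} \<times> {..<N}) (\<lambda>A. \<bar>\<Sum>i\<in>I. c j i * walsh (graph_set {1..m} i) A\<bar> powr p)" for j
  define r where "r = 2 / p"
  have r: "1 \<le> r" "0 < r" "p * r = 2" using assms by (auto simp: r_def field_simps)
  have F: "0 \<le> F" unfolding F_def by (rule form_norm_nonneg[OF cont])
  define X where "X = (\<Sum>i\<in>I. (\<Sum>j<N. \<bar>c j i\<bar> powr p) powr r)"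
  have "X powr (1 / r) \<le> (\<Sum>j<N. (\<Sum>i\<in>I. (\<bar>c j i\<bar> powr p) powr r) powr (1 / r))"
    unfolding X_def by (rule minkowski_inequality_sum_sum) (use r in auto)
  also have "\<dots> = (\<Sum>j<N. (\<Sum>i\<in>I. (c j i)\<^sup>2) powr (p / 2))"
  proof -
    have "(\<bar>t\<bar> powr p) powr r = t\<^sup>2" for t :: real
      using r by (cases "t = 0") (simp_all add: powr_powr powr_numeral)
    then show ?thesis by (simp add: r_def)
  qed
  also have "\<dots> \<le> (\<Sum>j<N. (3 ^ m) powr p * E j)"
    unfolding I_def E_def by (intro sum_mono graph_chaos_khintchine assms(1))
  also have "\<dots> \<le> (3 ^ m) powr p * F powr p"
    using sum_rows_chaos_le_form_norm[OF assms(1) cont, of N]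
    unfolding sum_distrib_left[symmetric] E_def c_def I_def F_def by (intro mult_left_mono) auto
  also have "\<dots> = (3 ^ m * F) powr p" using F by (simp add: powr_mult)
  finally have "X powr (1 / r) \<le> (3 ^ m * F) powr p" .
  then have "(X powr (1 / r)) powr (1 / p) \<le> ((3 ^ m * F) powr p) powr (1 / p)"
    using assms(1) by (intro powr_mono2) (auto simp: X_def sum_nonneg)
  then show "mixed_sum (Suc m) (conj_ereal p) T N \<le> 3 ^ m * F"
    unfolding mixed_sum_eq_coeff[OF assms(1)] using F r assms(1)
    by (simp add: powr_powr X_def I_def c_def r_def)
qed simp

section \<open>Passing to the infimum, and the Khintchine constants\<close>

text \<open>The admissible constant \<open>D\<^sub>0\<close> is essential: \<open>D_const\<close> is an infimum of reals, which is
  unspecified for the empty set.\<close>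

lemma le_D_const_mult:
  assumes "\<And>D. D_admissible M q D \<Longrightarrow> L \<le> D * J" "0 \<le> J" "D_admissible M q D\<^sub>0"
  shows "L \<le> D_const M q * J"
proof (cases "J = 0")
  case True
  then show ?thesis using assms(1)[OF assms(3)] by simp
next
  case False
  then have J: "0 < J" using assms(2) by simp
  have "L / J \<le> Inf (Collect (D_admissible M q))"
    using assms(1,3) J by (intro cInf_greatest) (auto simp: pos_divide_le_eq)
  then show ?thesis using J by (simp add: D_const_eq_Inf pos_divide_le_eq)
qed

theorem rademacher_chaos_le_D_const:
  fixes y :: "(nat \<Rightarrow> nat) \<Rightarrow> real"
  assumes "1 \<le> p" "p \<le> 2"
  shows "sqrt (\<Sum>i\<in>{1..m} \<rightarrow>\<^sub>E {1..N}. (y i)\<^sup>2) \<le> D_const (Suc m) (conj_ereal p) *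
    (integral\<^sup>L (unit_cube m) (\<lambda>t. \<bar>\<Sum>i\<in>{1..m} \<rightarrow>\<^sub>E {1..N}. (\<Prod>k\<in>{1..m}. rademacher (i k) (t k)) * y i\<bar> powr p))
      powr (1 / p)"
  unfolding integral_rademacher_chaos_eq_cube_avg
  by (rule le_D_const_mult[OF l2_le_admissible_mult_chaos_norm[OF assms(1)] powr_ge_zero three_pow_admissible[OF assms]])

lemma abs_rademacher_le_1: "\<bar>rademacher j t\<bar> \<le> 1"
  unfolding rademacher_def by (simp add: abs_sgn_eq)

lemma integrable_rademacher_sum_powr:
  assumes "0 \<le> p"
  shows "integrable (restrict_space lborel {0..1::real}) (\<lambda>t. \<bar>\<Sum>j\<in>J. rademacher j t * a j\<bar> powr p)"
proof (rule finite_measure.integrable_const_bound)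
  show "finite_measure (restrict_space lborel {0..1::real})"
    using prob_space_unit_interval by (rule prob_space.finite_measure)
  have "\<bar>\<Sum>j\<in>J. rademacher j t * a j\<bar> \<le> (\<Sum>j\<in>J. \<bar>a j\<bar>)" for t
    by (rule order.trans[OF sum_abs sum_mono]) (simp add: abs_mult mult_left_le_one_le abs_rademacher_le_1)
  then show "AE t in restrict_space lborel {0..1}. norm (\<bar>\<Sum>j\<in>J. rademacher j t * a j\<bar> powr p) \<le> (\<Sum>j\<in>J. \<bar>a j\<bar>) powr p"
    using assms by (intro AE_I2) (simp add: powr_mono2)
qed (intro measurable_restrict_space1; measurable)

lemma integral_rademacher_tensor:
  assumes "0 \<le> p"
  shows "integral\<^sup>L (unit_cube m)
      (\<lambda>t. \<bar>\<Sum>i\<in>{1..m} \<rightarrow>\<^sub>E {1..n}. (\<Prod>k\<in>{1..m}. rademacher (i k) (t k)) * (\<Prod>k\<in>{1..m}. a (i k))\<bar> powr p)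
    = (LINT t:{0..1}|lborel. \<bar>\<Sum>j=1..n. a j * rademacher j t\<bar> powr p) ^ m"
proof -
  define g where "g t = \<bar>\<Sum>j\<in>{1..n}. rademacher j t * a j\<bar> powr p" for t
  have "(\<Sum>i\<in>{1..m} \<rightarrow>\<^sub>E {1..n}. (\<Prod>k\<in>{1..m}. rademacher (i k) (t k)) * (\<Prod>k\<in>{1..m}. a (i k)))
      = (\<Prod>k\<in>{1..m}. \<Sum>j\<in>{1..n}. rademacher j (t k) * a j)" for t
    by (simp add: prod_sum_PiE prod.distrib)
  then have "integral\<^sup>L (unit_cube m)
      (\<lambda>t. \<bar>\<Sum>i\<in>{1..m} \<rightarrow>\<^sub>E {1..n}. (\<Prod>k\<in>{1..m}. rademacher (i k) (t k)) * (\<Prod>k\<in>{1..m}. a (i k))\<bar> powr p)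
    = integral\<^sup>L (unit_cube m) (\<lambda>t. \<Prod>k\<in>{1..m}. g (t k))"
    unfolding g_def by (simp add: abs_prod prod_powr_distrib)
  also have "\<dots> = (\<Prod>k\<in>{1..m}. integral\<^sup>L (restrict_space lborel {0..1::real}) g)"
    using integrable_rademacher_sum_powr[OF assms] unfolding g_def by (intro unit_interval.product_integral_prod) auto
  also have "integral\<^sup>L (restrict_space lborel {0..1::real}) g = (LINT t:{0..1}|lborel. \<bar>\<Sum>j=1..n. a j * rademacher j t\<bar> powr p)"
    unfolding set_lebesgue_integral_def g_def by (subst integral_restrict_space) (auto simp: mult.commute)
  finally show ?thesis by simp
qed

lemma khintchine_A_bounds:
  assumes "\<And>(n::nat) (a::nat \<Rightarrow> real). sqrt (\<Sum>j=1..n. (a j)\<^sup>2) \<le>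
      R * (LINT t:{0..1}|lborel. \<bar>\<Sum>j=1..n. a j * rademacher j t\<bar> powr p) powr (1 / p)"
  shows "0 \<le> khintchine_A p" "khintchine_A p \<le> R"
proof -
  define KS where "KS = {A. \<forall>(n::nat) (a::nat \<Rightarrow> real). sqrt (\<Sum>j=1..n. (a j)\<^sup>2) \<le>
      A * (LINT t:{0..1}|lborel. \<bar>\<Sum>j=1..n. a j * rademacher j t\<bar> powr p) powr (1 / p)}"
  have "R \<in> KS" unfolding KS_def using assms by blast
  moreover have "0 \<le> A" if "A \<in> KS" for A
  proof (rule ccontr)
    define Y where "Y = (LINT t:{0..1}|lborel. \<bar>\<Sum>j=1..1. (\<lambda>_. 1::real) j * rademacher j t\<bar> powr p) powr (1 / p)"
    have "\<forall>(n::nat) (a::nat \<Rightarrow> real). sqrt (\<Sum>j=1..n. (a j)\<^sup>2) \<le>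
        A * (LINT t:{0..1}|lborel. \<bar>\<Sum>j=1..n. a j * rademacher j t\<bar> powr p) powr (1 / p)"
      using that unfolding KS_def by simp
    from spec[OF spec[OF this, of 1], of "\<lambda>_. 1"] have "1 \<le> A * Y" unfolding Y_def by simp
    moreover assume "\<not> 0 \<le> A"
    then have "A * Y \<le> 0" unfolding Y_def by (simp add: mult_nonpos_nonneg)
    ultimately show False by simp
  qed
  ultimately have "bdd_below KS" "KS \<noteq> {}" by (auto intro: bdd_belowI[of _ 0])
  then show "0 \<le> khintchine_A p" "khintchine_A p \<le> R"
    unfolding khintchine_A_def KS_def[symmetric]
    using \<open>R \<in> KS\<close> \<open>\<And>A. A \<in> KS \<Longrightarrow> 0 \<le> A\<close> by (auto intro: cInf_greatest cInf_lower)
qed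

lemma product_chaos_le_D_const:
  assumes "1 \<le> p" "p \<le> 2"
  shows "sqrt (\<Sum>j=1..n. (a j)\<^sup>2) ^ m \<le> D_const (Suc m) (conj_ereal p) *
    ((LINT t:{0..1}|lborel. \<bar>\<Sum>j=1..n. a j * rademacher j t\<bar> powr p) powr (1 / p)) ^ m"
proof -
  define I where "I = (LINT t:{0..1}|lborel. \<bar>\<Sum>j=1..n. a j * rademacher j t\<bar> powr p)"
  have "0 \<le> I"
    unfolding I_def set_lebesgue_integral_def by (rule integral_nonneg_AE) (simp add: indicator_def)
  then have I: "(I ^ m) powr (1 / p) = (I powr (1 / p)) ^ m"
    by (induction m) (simp_all add: powr_mult)
  have "(\<Sum>i\<in>{1..m} \<rightarrow>\<^sub>E {1..n}. (\<Prod>k\<in>{1..m}. a (i k))\<^sup>2) = (\<Sum>i\<in>{1..m} \<rightarrow>\<^sub>E {1..n}. \<Prod>k\<in>{1..m}. (a (i k))\<^sup>2)"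
    by (simp add: prod_power_distrib)
  also have "\<dots> = (\<Prod>k\<in>{1..m}. \<Sum>j\<in>{1..n}. (a j)\<^sup>2)"
    by (rule prod_sum_PiE[symmetric]) auto
  finally have "(\<Sum>i\<in>{1..m} \<rightarrow>\<^sub>E {1..n}. (\<Prod>k\<in>{1..m}. a (i k))\<^sup>2) = (\<Sum>j=1..n. (a j)\<^sup>2) ^ m"
    by simp
  then show ?thesis
    using rademacher_chaos_le_D_const[OF assms, where m=m and N=n and y="\<lambda>i. \<Prod>k\<in>{1..m}. a (i k)"]
    unfolding integral_rademacher_tensor[OF order.trans[OF zero_le_one assms(1)]] I_def[symmetric] I
    by (simp add: real_sqrt_power)
qed

theorem khintchine_A_pow_le_D_const:
  assumes "1 \<le> p" "p \<le> 2" "0 < m"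
  shows "khintchine_A p ^ m \<le> D_const (Suc m) (conj_ereal p)"
proof -
  define C where "C = D_const (Suc m) (conj_ereal p)"
  have "0 \<le> C"
    using le_D_const_mult[of "Suc m" "conj_ereal p" 0 1 "3 ^ m"] three_pow_admissible[OF assms(1,2)]
    unfolding C_def D_admissible_def by simp
  then have R: "0 \<le> root m C" "root m C ^ m = C" using assms(3) by simp_all
  have "sqrt (\<Sum>j=1..n. (a j)\<^sup>2) \<le> root m C *
      (LINT t:{0..1}|lborel. \<bar>\<Sum>j=1..n. a j * rademacher j t\<bar> powr p) powr (1 / p)" for n a
  proof -
    define X where "X = (LINT t:{0..1}|lborel. \<bar>\<Sum>j=1..n. a j * rademacher j t\<bar> powr p) powr (1 / p)"
    have "sqrt (\<Sum>j=1..n. (a j)\<^sup>2) ^ m \<le> C * X ^ m"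
      using product_chaos_le_D_const[OF assms(1,2)] unfolding C_def X_def .
    also have "\<dots> = (root m C * X) ^ m" by (simp add: power_mult_distrib R(2))
    finally show ?thesis
      using R(1) assms(3) power_mono_iff[of "sqrt (\<Sum>j=1..n. (a j)\<^sup>2)" "root m C * X" m]
      unfolding X_def by (simp add: sum_nonneg)
  qed
  from khintchine_A_bounds[OF this] show ?thesis
    using R unfolding C_def by (metis power_mono)
qed

theorem theorem4p3:
  fixes p :: real and m :: nat
  assumes "1 \<le> p" and "p \<le> 2" and "m \<ge> 2"
  shows "(\<forall>(N::nat) (y::(nat \<Rightarrow> nat) \<Rightarrow> real).
            sqrt (\<Sum>i\<in>({1..m} \<rightarrow>\<^sub>E {1..N}). (y i)\<^sup>2)
            \<le> D_const (m + 1) (conj_ereal p) *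
               (integral\<^sup>L (Pi\<^sub>M {1..m} (\<lambda>_. restrict_space lborel {0..1}))
                  (\<lambda>t. \<bar>\<Sum>i\<in>({1..m} \<rightarrow>\<^sub>E {1..N}).
                          (\<Prod>k\<in>{1..m}. rademacher (i k) (t k)) * y i\<bar> powr p)) powr (1 / p))
         \<and> khintchine_A p ^ m \<le> D_const (m + 1) (conj_ereal p)"
  using rademacher_chaos_le_D_const[OF assms(1,2)] khintchine_A_pow_le_D_const[OF assms(1,2)] assms(3)
  by simp

end
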